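(* Let $d\ge1$, $\alpha\in(0,2)$, and let $D\subset\mathbb{R}^d$ be a Borel set. For every $\gamma\in[0,\alpha)$ there exists a constant $C_3=C_3(d,\alpha,\gamma)>0$ such that for every (nonnegative) measure $\mu$ on $D$ and every $(t,x,y)\in(0,\infty)\times D\times D$, $$\int_0^t\int_D\psi_\gamma(t-s,x,z)\psi_\gamma(s,z,y)q(t-s,x,z)q(s,z,y)\,\mu(dz)\,ds\le C_3\,\psi_\gamma(t,x,y)q(t,x,y)\sup_{u\in D}\int_0^t\int_D\Big(1\wedge\frac{\delta_D(z)}{s^{1/\alpha}}\Big)^\gamma q(s,u,z)\,\mu(dz)\,ds.$$
   Context: $\delta_D(x)$ is the Euclidean distance from $x$ to $D^c$; $q(t,x,y):=t^{-d/\alpha}\wedge\frac{t}{|x-y|^{d+\alpha}}$; $\psi_\gamma(t,x,y):=\big(1\wedge\frac{\delta_D(x)}{t^{1/\alpha}}\big)^\gamma\big(1\wedge\frac{\delta_D(y)}{t^{1/\alpha}}\big)^\gamma$. *)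

theory Defs
  imports "HOL-Analysis.Analysis"
begin

definition bfac :: "real \<Rightarrow> 'a::euclidean_space set \<Rightarrow> real \<Rightarrow> 'a \<Rightarrow> real" where
  "bfac \<alpha> D t x = (if - D = {} then 1 else min 1 (infdist x (- D) / t powr (1 / \<alpha>)))"

text \<open>Power with the convention 0^0 = 1.\<close>
definition pw :: "real \<Rightarrow> real \<Rightarrow> real" where
  "pw a g = (if g = 0 then 1 else a powr g)"

definition psi :: "real \<Rightarrow> real \<Rightarrow> 'a::euclidean_space set \<Rightarrow> real \<Rightarrow> 'a \<Rightarrow> 'a \<Rightarrow> real" where
  "psi \<alpha> \<gamma> D t x y = pw (bfac \<alpha> D t x) \<gamma> * pw (bfac \<alpha> D t y) \<gamma>"

text \<open>q(t,x,y) = t^(-d/alpha) min t/|x-y|^(d+alpha), with t/0 = infinity.\<close>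
definition q :: "real \<Rightarrow> real \<Rightarrow> 'a::euclidean_space \<Rightarrow> 'a \<Rightarrow> real" where
  "q \<alpha> t x y = (if x = y then t powr (- real DIM('a) / \<alpha>)
     else min (t powr (- real DIM('a) / \<alpha>)) (t / dist x y powr (real DIM('a) + \<alpha>)))"

end

theory Submission
  imports Defs
begin

text \<open>
  By the symmetry (s, x, y) \<mapsto> (t - s, y, x) it suffices to treat s \<ge> t/2, where s is
  comparable to t. Put a = t - s. If q(s,z,y) is dominated by q(t,x,y), the boundary factors
  at times a and s are traded for those at time t, at the price of the weight
  W = min ((t/a)^(1/\<alpha>)) (1 + |x - z| / a^(1/\<alpha>)); otherwise z is close to y, so
  |x - z| \<ge> |x - y|/2 and q(a,x,z) is dominated by q(t,x,y). The weight W^\<gamma> is then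
  absorbed by the time integral: with m = min (|x - z|^\<alpha>) (t/2), it is bounded for a \<ge> m,
  while for a < m it contributes at most a multiple of m^(2\<gamma>/\<alpha>) |x - z|^(-d-\<alpha>)
  \<integral>_0^m a^(1 - 2\<gamma>/\<alpha>) da, which is finite because \<gamma> < \<alpha> and is dominated by the part
  a \<in> [m, 2m] of the time integral of the kernel itself. Exchanging the order of integration
  needs \<sigma>-finiteness of \<mu>, which holds after discarding the part of \<mu> where the
  integrands vanish whenever the right-hand side is finite.
\<close>

section \<open>Elementary bounds for the boundary factor and the kernel\<close>

lemma min_one_div_le_scaled:
  fixes d A T :: real
  assumes "0 \<le> d" "0 < A" "A \<le> T"
  shows "min 1 (d / A) \<le> (T / A) * min 1 (d / T)"
proof (cases "d \<le> T")
  case True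
  then have "min 1 (d / T) = d / T" using assms by (auto simp: min_def field_simps)
  moreover have "(T / A) * (d / T) = d / A" using assms by (simp add: field_simps)
  ultimately show ?thesis by simp
next
  case False
  then have "min 1 (d / T) = 1" using assms by (simp add: min_def field_simps)
  moreover have "1 \<le> T / A" using assms by simp
  ultimately show ?thesis by simp
qed

lemma min_one_div_mult_le_triangle:
  fixes dx dz r A T :: real
  assumes "0 \<le> dx" "0 \<le> dz" "0 \<le> r" "0 < A" "A \<le> T" "dz \<le> dx + r"
  shows "min 1 (dx / A) * min 1 (dz / T) \<le> min 1 (dx / T) * (1 + r / A)"
proof -
  have T: "0 < T" using assms by simp
  have dz: "min 1 (dz / T) \<le> (dx + r) / T"
    using assms T by (simp add: min.coboundedI2 divide_right_mono)
  consider "dx \<le> A" | "A < dx" "dx \<le> T" | "T < dx" by linarith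
  then show ?thesis
  proof cases
    case 1
    have "min 1 (dx / A) * min 1 (dz / T) \<le> (dx / A) * ((dx + r) / T)"
      using dz assms T by (intro mult_mono) auto
    also have "\<dots> = (dx / T) * (dx / A + r / A)" using assms by (simp add: field_simps)
    also have "\<dots> \<le> (dx / T) * (1 + r / A)"
      using 1 assms T by (intro mult_left_mono) auto
    also have "dx / T = min 1 (dx / T)" using 1 assms by (simp add: min_def)
    finally show ?thesis .
  next
    case 2
    have "min 1 (dx / A) * min 1 (dz / T) \<le> 1 * ((dx + r) / T)"
      using dz assms T by (intro mult_mono) auto
    also have "\<dots> = dx / T + (dx / T) * (r / dx)" using 2 assms by (simp add: field_simps)
    also have "\<dots> \<le> dx / T + (dx / T) * (r / A)"
      using 2 assms T by (intro add_left_mono mult_left_mono divide_left_mono) auto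
    also have "\<dots> = min 1 (dx / T) * (1 + r / A)" using 2 T by (simp add: min_def field_simps)
    finally show ?thesis by simp
  next
    case 3
    then have "min 1 (dx / T) = 1" using T by (simp add: min_def field_simps)
    moreover have "min 1 (dx / A) * min 1 (dz / T) \<le> 1"
      by (intro mult_le_one) (use assms in auto)
    moreover have "0 \<le> r / A" using assms by simp
    ultimately show ?thesis by simp
  qed
qed

lemma mult_mono3:
  fixes a b c :: real
  assumes "a \<le> a'" "b \<le> b'" "c \<le> c'" "0 \<le> a" "0 \<le> b" "0 \<le> c"
  shows "a * b * c \<le> a' * b' * c'"
  using assms by (simp add: mult_mono')

context
  fixes \<alpha> :: real
  assumes \<alpha>: "0 < \<alpha>"
begin

lemma bfac_nonneg: "0 \<le> t \<Longrightarrow> 0 \<le> bfac \<alpha> D t x"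
  unfolding bfac_def by (auto simp: infdist_nonneg)

lemma bfac_le_one: "bfac \<alpha> D t x \<le> 1"
  unfolding bfac_def by auto

lemma bfac_antimono:
  assumes "0 < a" "a \<le> t"
  shows "bfac \<alpha> D t w \<le> bfac \<alpha> D a w"
proof -
  have "a powr (1/\<alpha>) \<le> t powr (1/\<alpha>)" using assms \<alpha> by (intro powr_mono2) auto
  then have "infdist w (-D) / t powr (1/\<alpha>) \<le> infdist w (-D) / a powr (1/\<alpha>)"
    using assms by (intro divide_left_mono) (auto simp: infdist_nonneg)
  then show ?thesis unfolding bfac_def by auto
qed

lemma bfac_le_scaled:
  assumes "0 < a" "a \<le> t"
  shows "bfac \<alpha> D a w \<le> (t/a) powr (1/\<alpha>) * bfac \<alpha> D t w"
proof -
  have "1 \<le> (t/a) powr (1/\<alpha>)" using assms \<alpha> by (intro ge_one_powr_ge_zero) auto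
  moreover have "(t/a) powr (1/\<alpha>) = t powr (1/\<alpha>) / a powr (1/\<alpha>)"
    using assms by (simp add: powr_divide)
  moreover have "a powr (1/\<alpha>) \<le> t powr (1/\<alpha>)" using assms \<alpha> by (intro powr_mono2) auto
  ultimately show ?thesis
    using min_one_div_le_scaled[of "infdist w (-D)" "a powr (1/\<alpha>)" "t powr (1/\<alpha>)"] assms
    unfolding bfac_def by (simp add: infdist_nonneg)
qed

lemma bfac_le_double:
  assumes "0 < s" "s \<le> t" "t \<le> 2 * s"
  shows "bfac \<alpha> D s w \<le> 2 powr (1/\<alpha>) * bfac \<alpha> D t w"
proof -
  have "(t/s) powr (1/\<alpha>) \<le> 2 powr (1/\<alpha>)"
    using assms \<alpha> by (intro powr_mono2) (auto simp: field_simps)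
  then have "(t/s) powr (1/\<alpha>) * bfac \<alpha> D t w \<le> 2 powr (1/\<alpha>) * bfac \<alpha> D t w"
    using assms by (intro mult_right_mono bfac_nonneg) auto
  with bfac_le_scaled[of s t D w] assms show ?thesis by linarith
qed

lemma bfac_mult_le_triangle:
  assumes "0 < a" "a \<le> t"
  shows "bfac \<alpha> D a x * bfac \<alpha> D t z \<le> bfac \<alpha> D t x * (1 + dist x z / a powr (1/\<alpha>))"
proof (cases "- D = {}")
  case True
  then show ?thesis using assms unfolding bfac_def by auto
next
  case False
  have "infdist z (-D) \<le> infdist x (-D) + dist x z"
    using infdist_triangle[of z "-D" x] by (simp add: dist_commute)
  moreover have "a powr (1/\<alpha>) \<le> t powr (1/\<alpha>)" using assms \<alpha> by (intro powr_mono2) auto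
  ultimately show ?thesis unfolding bfac_def using False assms
    by (auto intro!: min_one_div_mult_le_triangle infdist_nonneg)
qed

end

lemma pw_nonneg: "0 \<le> pw a g"
  unfolding pw_def by auto

lemma pw_le_one: "0 \<le> a \<Longrightarrow> a \<le> 1 \<Longrightarrow> 0 \<le> g \<Longrightarrow> pw a g \<le> 1"
  unfolding pw_def by (auto intro: powr_le1)

lemma pw_ge_one: "1 \<le> a \<Longrightarrow> 0 \<le> g \<Longrightarrow> 1 \<le> pw a g"
  unfolding pw_def by (auto intro: ge_one_powr_ge_zero)

lemma pw_mono: "0 \<le> a \<Longrightarrow> a \<le> b \<Longrightarrow> 0 \<le> g \<Longrightarrow> pw a g \<le> pw b g"
  unfolding pw_def by (auto intro: powr_mono2)

lemma pw_mult: "0 \<le> a \<Longrightarrow> 0 \<le> b \<Longrightarrow> pw (a * b) g = pw a g * pw b g"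
  unfolding pw_def by (auto simp: powr_mult)

lemma pw_pos_eq_powr: "0 < a \<Longrightarrow> pw a g = a powr g"
  unfolding pw_def by auto

lemma pw_powr_inverse_le:
  assumes "1 \<le> X" "0 \<le> \<gamma>" "\<gamma> \<le> \<alpha>" "0 < \<alpha>"
  shows "pw (X powr (1/\<alpha>)) \<gamma> \<le> X"
proof -
  have "pw (X powr (1/\<alpha>)) \<gamma> = X powr (\<gamma>/\<alpha>)" using assms by (simp add: pw_pos_eq_powr powr_powr)
  also have "\<dots> \<le> X powr 1" using assms by (intro powr_mono) auto
  finally show ?thesis using assms by simp
qed

lemma pw_bfac_le_double:
  assumes "0 < \<alpha>" "0 \<le> \<gamma>" "0 < s" "s \<le> t" "t \<le> 2 * s"
  shows "pw (bfac \<alpha> D s w) \<gamma> \<le> pw (2 powr (1/\<alpha>)) \<gamma> * pw (bfac \<alpha> D t w) \<gamma>"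
proof -
  have "pw (bfac \<alpha> D s w) \<gamma> \<le> pw (2 powr (1/\<alpha>) * bfac \<alpha> D t w) \<gamma>"
    using assms by (intro pw_mono bfac_le_double bfac_nonneg) auto
  also have "\<dots> = pw (2 powr (1/\<alpha>)) \<gamma> * pw (bfac \<alpha> D t w) \<gamma>"
    using assms by (intro pw_mult bfac_nonneg) auto
  finally show ?thesis .
qed

lemma psi_commute: "psi \<alpha> \<gamma> D t x y = psi \<alpha> \<gamma> D t y x"
  unfolding psi_def by simp

lemma q_commute: "q \<alpha> t x y = q \<alpha> t y x"
  unfolding q_def by (auto simp: dist_commute)

lemma q_pos: "0 < t \<Longrightarrow> 0 < q \<alpha> t x y"
  unfolding q_def by auto

lemma q_le_diag: "q \<alpha> t x y \<le> t powr (- real DIM('a) / \<alpha>)"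
  for x y :: "'a::euclidean_space"
  unfolding q_def by auto

lemma q_le_far: "x \<noteq> y \<Longrightarrow> q \<alpha> t x y \<le> t / dist x y powr (real DIM('a) + \<alpha>)"
  for x y :: "'a::euclidean_space"
  unfolding q_def by auto

lemma q_off_diag_eq: "x \<noteq> y \<Longrightarrow>
    q \<alpha> t x y = min (t powr (- real DIM('a) / \<alpha>)) (t / dist x y powr (real DIM('a) + \<alpha>))"
  for x y :: "'a::euclidean_space"
  unfolding q_def by auto

lemma q_diag_eq: "q \<alpha> t x x = t powr (- real DIM('a) / \<alpha>)"
  for x :: "'a::euclidean_space"
  unfolding q_def by auto

lemma q_le_half_time:
  fixes x y :: "'a::euclidean_space"
  assumes "0 < \<alpha>" "0 < t" "t \<le> 2 * s"
  shows "q \<alpha> s x y \<le> 2 powr (real DIM('a) / \<alpha>) * t powr (- real DIM('a) / \<alpha>)"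
proof -
  have "q \<alpha> s x y \<le> s powr (- real DIM('a) / \<alpha>)" by (rule q_le_diag)
  also have "\<dots> \<le> (t/2) powr (- real DIM('a) / \<alpha>)"
    using assms by (intro powr_mono2') auto
  also have "\<dots> = 2 powr (real DIM('a) / \<alpha>) * t powr (- real DIM('a) / \<alpha>)"
    using assms by (simp add: powr_divide powr_minus_divide divide_simps)
  finally show ?thesis .
qed

lemma q_lower_bound:
  fixes u z :: "'a::euclidean_space"
  assumes \<alpha>: "0 < \<alpha>" and uz: "u \<noteq> z" and m: "0 < m" "m \<le> dist u z powr \<alpha>"
    and a: "m \<le> a" "a \<le> 2 * m"
  shows "2 powr (- real DIM('a) / \<alpha>) * m / dist u z powr (real DIM('a) + \<alpha>) \<le> q \<alpha> a u z"
proof -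
  define d where "d = real DIM('a)"
  define r where "r = dist u z"
  define \<beta> where "\<beta> = d + \<alpha>"
  have r: "0 < r" using uz by (simp add: r_def)
  have d: "0 \<le> d" by (simp add: d_def)
  have c: "2 powr (- d / \<alpha>) \<le> 1"
    using powr_mono[of "- d / \<alpha>" 0 2] \<alpha> d by (simp add: divide_nonneg_pos)
  have r\<beta>: "0 < r powr \<beta>" using r by simp
  have time: "2 powr (- d / \<alpha>) * m / r powr \<beta> \<le> a / r powr \<beta>"
  proof -
    have "2 powr (- d / \<alpha>) * m \<le> 1 * a" using c m a by (intro mult_mono) auto
    then show ?thesis using r\<beta> by (simp add: divide_right_mono)
  qed
  have space: "2 powr (- d / \<alpha>) * m / r powr \<beta> \<le> a powr (- d / \<alpha>)"
  proof -
    have "m powr (\<beta>/\<alpha>) \<le> (r powr \<alpha>) powr (\<beta>/\<alpha>)"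
      using m \<alpha> d unfolding \<beta>_def by (intro powr_mono2) (auto simp: r_def)
    also have "\<dots> = r powr \<beta>" using \<alpha> r by (simp add: powr_powr)
    finally have 1: "m powr (\<beta>/\<alpha>) \<le> r powr \<beta>" .
    have "m / r powr \<beta> \<le> m / m powr (\<beta>/\<alpha>)" using 1 m r\<beta> by (intro divide_left_mono) auto
    also have "\<dots> = m powr (- d / \<alpha>)"
    proof -
      have "\<beta>/\<alpha> = 1 + d/\<alpha>" unfolding \<beta>_def using \<alpha> by (simp add: field_simps)
      then have "m powr (\<beta>/\<alpha>) = m * m powr (d/\<alpha>)" using m by (simp add: powr_add)
      then show ?thesis using m by (simp add: powr_minus_divide)
    qed
    finally have 2: "m / r powr \<beta> \<le> m powr (- d / \<alpha>)" .
    have "2 powr (- d / \<alpha>) * m / r powr \<beta> = 2 powr (- d / \<alpha>) * (m / r powr \<beta>)" by simp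
    also have "\<dots> \<le> 2 powr (- d / \<alpha>) * m powr (- d / \<alpha>)" using 2 by (intro mult_left_mono) auto
    also have "\<dots> = (2 * m) powr (- d / \<alpha>)" using m by (simp add: powr_mult)
    also have "\<dots> \<le> a powr (- d / \<alpha>)"
      using a m \<alpha> d by (intro powr_mono2') (auto simp: divide_nonneg_pos)
    finally show ?thesis .
  qed
  show ?thesis using time space uz unfolding d_def r_def \<beta>_def by (simp add: q_off_diag_eq)
qed

section \<open>Pointwise bound for the integrand\<close>

definition boundary_kernel :: "real \<Rightarrow> real \<Rightarrow> 'a::euclidean_space set \<Rightarrow> 'a \<Rightarrow> real \<Rightarrow> 'a \<Rightarrow> real" where
  "boundary_kernel \<alpha> \<gamma> D u s z = pw (bfac \<alpha> D s z) \<gamma> * q \<alpha> s u z"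

definition time_weight :: "real \<Rightarrow> real \<Rightarrow> real \<Rightarrow> 'a::euclidean_space \<Rightarrow> 'a \<Rightarrow> real" where
  "time_weight \<alpha> t a x z = min ((t/a) powr (1/\<alpha>)) (1 + dist x z / a powr (1/\<alpha>))"

definition weighted_kernel ::
    "real \<Rightarrow> real \<Rightarrow> 'a::euclidean_space set \<Rightarrow> real \<Rightarrow> 'a \<Rightarrow> real \<Rightarrow> 'a \<Rightarrow> real" where
  "weighted_kernel \<alpha> \<gamma> D t u a z =
     indicator {0<..t/2} a * pw (time_weight \<alpha> t a u z) \<gamma> * boundary_kernel \<alpha> \<gamma> D u a z"

lemma boundary_kernel_nonneg: "0 < s \<Longrightarrow> 0 \<le> boundary_kernel \<alpha> \<gamma> D u s z"
  unfolding boundary_kernel_def using q_pos[of s \<alpha> u z] by (simp add: pw_nonneg)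

lemma weighted_kernel_nonneg: "0 \<le> weighted_kernel \<alpha> \<gamma> D t u a z"
  unfolding weighted_kernel_def
  by (auto simp: indicator_def pw_nonneg intro!: boundary_kernel_nonneg mult_nonneg_nonneg)

lemma bfac_mult_le_time_weight:
  assumes \<alpha>: "0 < \<alpha>" and "0 < a" "a \<le> t" "0 < s" "s \<le> t" "t \<le> 2 * s"
  shows "bfac \<alpha> D a x * bfac \<alpha> D s z \<le> 2 powr (1/\<alpha>) * bfac \<alpha> D t x * time_weight \<alpha> t a x z"
proof -
  have c: "1 \<le> 2 powr (1/\<alpha>)" using \<alpha> by (intro ge_one_powr_ge_zero) auto
  have "bfac \<alpha> D a x * bfac \<alpha> D s z \<le> bfac \<alpha> D a x * (2 powr (1/\<alpha>) * bfac \<alpha> D t z)"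
    using assms by (intro mult_left_mono bfac_le_double bfac_nonneg) auto
  also have "\<dots> = 2 powr (1/\<alpha>) * (bfac \<alpha> D a x * bfac \<alpha> D t z)" by simp
  also have "\<dots> \<le> 2 powr (1/\<alpha>) * (bfac \<alpha> D t x * (1 + dist x z / a powr (1/\<alpha>)))"
    using assms by (intro mult_left_mono bfac_mult_le_triangle) auto
  finally have near: "bfac \<alpha> D a x * bfac \<alpha> D s z
      \<le> 2 powr (1/\<alpha>) * bfac \<alpha> D t x * (1 + dist x z / a powr (1/\<alpha>))" by simp
  have "bfac \<alpha> D a x * bfac \<alpha> D s z \<le> bfac \<alpha> D a x"
    using assms bfac_le_one[OF \<alpha>, of D s z] by (simp add: mult_left_le bfac_nonneg)
  also have "\<dots> \<le> (t/a) powr (1/\<alpha>) * bfac \<alpha> D t x" using assms by (intro bfac_le_scaled) auto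
  also have "\<dots> \<le> 2 powr (1/\<alpha>) * bfac \<alpha> D t x * (t/a) powr (1/\<alpha>)"
  proof -
    have "1 * bfac \<alpha> D t x \<le> 2 powr (1/\<alpha>) * bfac \<alpha> D t x"
      using c assms by (intro mult_right_mono bfac_nonneg) auto
    then have "(t/a) powr (1/\<alpha>) * (1 * bfac \<alpha> D t x)
        \<le> (t/a) powr (1/\<alpha>) * (2 powr (1/\<alpha>) * bfac \<alpha> D t x)"
      by (intro mult_left_mono) auto
    then show ?thesis by (simp add: ac_simps)
  qed
  finally have far: "bfac \<alpha> D a x * bfac \<alpha> D s z \<le> 2 powr (1/\<alpha>) * bfac \<alpha> D t x * (t/a) powr (1/\<alpha>)" .
  show ?thesis unfolding time_weight_def using near far by (simp add: min_def)
qed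

lemma pw_bfac_mult_q_le_far:
  fixes x z :: "'a::euclidean_space"
  assumes \<alpha>: "0 < \<alpha>" and \<gamma>: "0 \<le> \<gamma>" "\<gamma> \<le> \<alpha>" and a: "0 < a" "a \<le> t" and "x \<noteq> z"
  shows "pw (bfac \<alpha> D a x) \<gamma> * q \<alpha> a x z \<le> pw (bfac \<alpha> D t x) \<gamma> * (t / dist x z powr (real DIM('a) + \<alpha>))"
proof -
  have "pw (bfac \<alpha> D a x) \<gamma> \<le> pw ((t/a) powr (1/\<alpha>) * bfac \<alpha> D t x) \<gamma>"
    using assms by (intro pw_mono bfac_le_scaled bfac_nonneg) auto
  also have "\<dots> = pw ((t/a) powr (1/\<alpha>)) \<gamma> * pw (bfac \<alpha> D t x) \<gamma>"
    using assms by (intro pw_mult bfac_nonneg) auto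
  also have "\<dots> \<le> (t/a) * pw (bfac \<alpha> D t x) \<gamma>"
    using assms by (intro mult_right_mono pw_powr_inverse_le) (auto simp: pw_nonneg)
  finally have "pw (bfac \<alpha> D a x) \<gamma> * q \<alpha> a x z
      \<le> ((t/a) * pw (bfac \<alpha> D t x) \<gamma>) * (a / dist x z powr (real DIM('a) + \<alpha>))"
    using assms q_le_far[OF \<open>x \<noteq> z\<close>, of \<alpha> a] q_pos[of a \<alpha> x z]
    by (intro mult_mono) (auto simp: pw_nonneg)
  also have "\<dots> = pw (bfac \<alpha> D t x) \<gamma> * (t / dist x z powr (real DIM('a) + \<alpha>))"
    using a by (simp add: field_simps)
  finally show ?thesis .
qed

lemma q_not_dominated:
  fixes x y z :: "'a::euclidean_space"
  assumes \<alpha>: "0 < \<alpha>" and s: "0 < s" "s \<le> t" "t \<le> 2 * s"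
    and not_le: "\<not> q \<alpha> s z y \<le> (2 powr (real DIM('a) / \<alpha>) + 2 powr (real DIM('a) + \<alpha>)) * q \<alpha> t x y"
  shows "x \<noteq> y" "q \<alpha> t x y = t / dist x y powr (real DIM('a) + \<alpha>)" "dist x y < 2 * dist x z"
proof -
  define d where "d = real DIM('a)"
  define K where "K = 2 powr (d / \<alpha>) + 2 powr (d + \<alpha>)"
  have t: "0 < t" using s by simp
  have qs: "q \<alpha> s z y \<le> 2 powr (d / \<alpha>) * t powr (- d / \<alpha>)"
    unfolding d_def using \<alpha> s by (intro q_le_half_time) auto
  have diag: "\<not> q \<alpha> t x y = t powr (- d / \<alpha>)"
  proof
    assume "q \<alpha> t x y = t powr (- d / \<alpha>)"
    then have "q \<alpha> s z y \<le> K * q \<alpha> t x y"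
      using qs unfolding K_def by (simp add: distrib_right add_increasing2)
    with not_le show False unfolding K_def d_def by simp
  qed
  then show xy: "x \<noteq> y" unfolding d_def by (auto simp: q_diag_eq)
  then show Q: "q \<alpha> t x y = t / dist x y powr (real DIM('a) + \<alpha>)"
    using diag unfolding d_def by (auto simp: q_off_diag_eq min_def)
  show "dist x y < 2 * dist x z"
  proof (rule ccontr)
    assume "\<not> dist x y < 2 * dist x z"
    then have "dist x y / 2 \<le> dist z y"
      using dist_triangle[of x y z] by (simp add: dist_commute)
    moreover have "0 < dist x y" using xy by simp
    ultimately have zy: "z \<noteq> y" and "0 < d + \<alpha>" using \<alpha> by (auto simp: d_def)
    have "q \<alpha> s z y \<le> s / dist z y powr (d + \<alpha>)" unfolding d_def using zy by (rule q_le_far)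
    also have "\<dots> \<le> t / (dist x y / 2) powr (d + \<alpha>)"
      using \<open>dist x y / 2 \<le> dist z y\<close> \<open>0 < dist x y\<close> \<open>0 < d + \<alpha>\<close> s
      by (intro frac_le powr_mono2) auto
    also have "\<dots> = 2 powr (d + \<alpha>) * q \<alpha> t x y"
      unfolding Q d_def[symmetric] using \<open>0 < dist x y\<close> by (simp add: powr_divide field_simps)
    also have "\<dots> \<le> K * q \<alpha> t x y"
      unfolding K_def using q_pos[OF t, of \<alpha> x y] by (simp add: distrib_right add_increasing)
    finally show False using not_le unfolding K_def d_def by simp
  qed
qed

lemma convolution_integrand_le_near:
  fixes x y z :: "'a::euclidean_space"
  assumes \<alpha>: "0 < \<alpha>" and \<gamma>: "0 \<le> \<gamma>" and s: "0 < s" "s < t" "t \<le> 2 * s"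
    and near: "q \<alpha> s z y \<le> K * q \<alpha> t x y"
  shows "psi \<alpha> \<gamma> D (t-s) x z * psi \<alpha> \<gamma> D s z y * q \<alpha> (t-s) x z * q \<alpha> s z y
    \<le> pw (2 powr (1/\<alpha>)) \<gamma> * pw (2 powr (1/\<alpha>)) \<gamma> * K * (psi \<alpha> \<gamma> D t x y * q \<alpha> t x y)
       * weighted_kernel \<alpha> \<gamma> D t x (t-s) z"
proof -
  define a where "a = t - s"
  have a: "0 < a" "a \<le> t/2" "a \<le> t" using s by (auto simp: a_def)
  define E where "E = pw (2 powr (1/\<alpha>)) \<gamma>"
  define W where "W = time_weight \<alpha> t a x z"
  define bx where "bx = pw (bfac \<alpha> D a x) \<gamma>"
  define bz where "bz = pw (bfac \<alpha> D a z) \<gamma>"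
  define cz where "cz = pw (bfac \<alpha> D s z) \<gamma>"
  define cy where "cy = pw (bfac \<alpha> D s y) \<gamma>"
  define Tx where "Tx = pw (bfac \<alpha> D t x) \<gamma>"
  define Ty where "Ty = pw (bfac \<alpha> D t y) \<gamma>"
  have E: "1 \<le> E" unfolding E_def using \<alpha> \<gamma> by (intro pw_ge_one ge_one_powr_ge_zero) auto
  have W: "0 \<le> W" unfolding W_def time_weight_def using a by auto
  have q: "0 < q \<alpha> a x z" "0 < q \<alpha> s z y" "0 < q \<alpha> t x y" using a s by (auto intro: q_pos)
  have "pw (bfac \<alpha> D a x * bfac \<alpha> D s z) \<gamma> \<le> pw (2 powr (1/\<alpha>) * bfac \<alpha> D t x * W) \<gamma>"
    unfolding W_def using \<alpha> \<gamma> a s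
    by (intro pw_mono bfac_mult_le_time_weight mult_nonneg_nonneg bfac_nonneg) auto
  then have bxcz: "bx * cz \<le> E * Tx * pw W \<gamma>"
    unfolding bx_def cz_def E_def Tx_def using \<alpha> a s W
    by (simp add: pw_mult bfac_nonneg)
  have cyqs: "cy * q \<alpha> s z y \<le> (E * Ty) * (K * q \<alpha> t x y)"
    unfolding cy_def E_def Ty_def using \<alpha> \<gamma> s near q
    by (intro mult_mono pw_bfac_le_double) (auto simp: pw_nonneg)
  have "psi \<alpha> \<gamma> D (t-s) x z * psi \<alpha> \<gamma> D s z y * q \<alpha> (t-s) x z * q \<alpha> s z y
      = (bx * cz) * (bz * q \<alpha> a x z) * (cy * q \<alpha> s z y)"
    unfolding psi_def a_def bx_def bz_def cz_def cy_def by (simp add: ac_simps)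
  also have "\<dots> \<le> (E * Tx * pw W \<gamma>) * (bz * q \<alpha> a x z) * ((E * Ty) * (K * q \<alpha> t x y))"
    using bxcz cyqs q unfolding bx_def bz_def cz_def cy_def
    by (intro mult_mono3) (auto simp: pw_nonneg)
  also have "\<dots> = E * E * K * (Tx * Ty * q \<alpha> t x y) * (pw W \<gamma> * bz * q \<alpha> a x z)"
    by (simp add: ac_simps)
  also have "pw W \<gamma> * bz * q \<alpha> a x z = weighted_kernel \<alpha> \<gamma> D t x (t-s) z"
    unfolding weighted_kernel_def boundary_kernel_def W_def bz_def a_def[symmetric] using a by simp
  finally show ?thesis unfolding E_def Tx_def Ty_def psi_def .
qed

lemma convolution_integrand_le_far:
  fixes x y z :: "'a::euclidean_space"
  assumes \<alpha>: "0 < \<alpha>" and \<gamma>: "0 \<le> \<gamma>" "\<gamma> \<le> \<alpha>" and s: "0 < s" "s < t" "t \<le> 2 * s"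
    and far: "\<not> q \<alpha> s z y \<le> (2 powr (real DIM('a) / \<alpha>) + 2 powr (real DIM('a) + \<alpha>)) * q \<alpha> t x y"
  shows "psi \<alpha> \<gamma> D (t-s) x z * psi \<alpha> \<gamma> D s z y * q \<alpha> (t-s) x z * q \<alpha> s z y
    \<le> 2 powr (real DIM('a) + \<alpha>) * pw (2 powr (1/\<alpha>)) \<gamma> * (psi \<alpha> \<gamma> D t x y * q \<alpha> t x y)
       * boundary_kernel \<alpha> \<gamma> D y s z"
proof -
  define a where "a = t - s"
  have a: "0 < a" "a \<le> t" using s by (auto simp: a_def)
  define \<beta> where "\<beta> = real DIM('a) + \<alpha>"
  define E where "E = pw (2 powr (1/\<alpha>)) \<gamma>"
  define bx where "bx = pw (bfac \<alpha> D a x) \<gamma>"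
  define bz where "bz = pw (bfac \<alpha> D a z) \<gamma>"
  define cz where "cz = pw (bfac \<alpha> D s z) \<gamma>"
  define cy where "cy = pw (bfac \<alpha> D s y) \<gamma>"
  define Tx where "Tx = pw (bfac \<alpha> D t x) \<gamma>"
  define Ty where "Ty = pw (bfac \<alpha> D t y) \<gamma>"
  note xy = q_not_dominated[OF \<alpha> s(1) less_imp_le[OF s(2)] s(3) far]
  have dxy: "0 < dist x y" using xy(1) s by simp
  then have xz: "x \<noteq> z" using xy(3) s by auto
  have q: "0 < q \<alpha> a x z" "0 < q \<alpha> s z y" using a s by (auto intro: q_pos)
  have "bx * q \<alpha> a x z \<le> Tx * (t / dist x z powr \<beta>)"
    unfolding bx_def Tx_def \<beta>_def using \<alpha> \<gamma> a xz by (intro pw_bfac_mult_q_le_far) auto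
  also have "\<dots> \<le> Tx * (t / (dist x y / 2) powr \<beta>)"
    unfolding Tx_def \<beta>_def using xy(3) dxy \<alpha> s
    by (intro mult_left_mono frac_le powr_mono2) (auto simp: pw_nonneg)
  also have "t / (dist x y / 2) powr \<beta> = 2 powr \<beta> * q \<alpha> t x y"
    unfolding xy(2) \<beta>_def[symmetric] using dxy by (simp add: powr_divide field_simps)
  finally have bxqa: "bx * q \<alpha> a x z \<le> 2 powr \<beta> * Tx * q \<alpha> t x y" by (simp add: ac_simps)
  have bzcy: "bz * cy \<le> 1 * (E * Ty)"
    unfolding bz_def cy_def E_def Ty_def using \<alpha> \<gamma> s a
    by (intro mult_mono pw_le_one bfac_nonneg bfac_le_one pw_bfac_le_double) (auto simp: pw_nonneg)
  have "psi \<alpha> \<gamma> D (t-s) x z * psi \<alpha> \<gamma> D s z y * q \<alpha> (t-s) x z * q \<alpha> s z y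
      = (bx * q \<alpha> a x z) * (bz * cy) * (cz * q \<alpha> s z y)"
    unfolding psi_def a_def bx_def bz_def cz_def cy_def by (simp add: ac_simps)
  also have "\<dots> \<le> (2 powr \<beta> * Tx * q \<alpha> t x y) * (1 * (E * Ty)) * (cz * q \<alpha> s z y)"
    using bxqa bzcy q unfolding bx_def bz_def cz_def cy_def
    by (intro mult_mono3) (auto simp: pw_nonneg)
  also have "\<dots> = 2 powr \<beta> * E * (Tx * Ty * q \<alpha> t x y) * (cz * q \<alpha> s y z)"
    by (simp add: ac_simps q_commute[of \<alpha> s z y])
  finally show ?thesis unfolding E_def Tx_def Ty_def psi_def boundary_kernel_def cz_def \<beta>_def .
qed

definition pointwise_const :: "real \<Rightarrow> real \<Rightarrow> nat \<Rightarrow> real" where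
  "pointwise_const \<alpha> \<gamma> n = pw (2 powr (1/\<alpha>)) \<gamma> *
     (pw (2 powr (1/\<alpha>)) \<gamma> * (2 powr (real n / \<alpha>) + 2 powr (real n + \<alpha>)) + 2 powr (real n + \<alpha>))"

lemma pointwise_const_pos:
  assumes "0 < \<alpha>" "0 \<le> \<gamma>"
  shows "0 < pointwise_const \<alpha> \<gamma> n"
proof -
  have "1 \<le> pw (2 powr (1/\<alpha>)) \<gamma>" using assms by (intro pw_ge_one ge_one_powr_ge_zero) auto
  then show ?thesis unfolding pointwise_const_def by (intro mult_pos_pos add_pos_pos) auto
qed

lemma convolution_integrand_le_second_half:
  fixes x y z :: "'a::euclidean_space"
  assumes \<alpha>: "0 < \<alpha>" and \<gamma>: "0 \<le> \<gamma>" "\<gamma> \<le> \<alpha>" and s: "0 < s" "s < t" "t \<le> 2 * s"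
  shows "psi \<alpha> \<gamma> D (t-s) x z * psi \<alpha> \<gamma> D s z y * q \<alpha> (t-s) x z * q \<alpha> s z y
    \<le> pointwise_const \<alpha> \<gamma> DIM('a) * (psi \<alpha> \<gamma> D t x y * q \<alpha> t x y)
       * (weighted_kernel \<alpha> \<gamma> D t x (t-s) z + boundary_kernel \<alpha> \<gamma> D y s z)"
proof -
  define E where "E = pw (2 powr (1/\<alpha>)) \<gamma>"
  define K where "K = 2 powr (real DIM('a) / \<alpha>) + 2 powr (real DIM('a) + \<alpha>)"
  define \<Phi> where "\<Phi> = psi \<alpha> \<gamma> D t x y * q \<alpha> t x y"
  define A where "A = weighted_kernel \<alpha> \<gamma> D t x (t-s) z"
  define B where "B = boundary_kernel \<alpha> \<gamma> D y s z"
  have nonneg: "0 \<le> E" "0 \<le> K" "0 \<le> \<Phi>" "0 \<le> A" "0 \<le> B"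
    unfolding E_def K_def \<Phi>_def A_def B_def psi_def using q_pos[of t \<alpha> x y] s
    by (auto simp: pw_nonneg weighted_kernel_nonneg boundary_kernel_nonneg)
  have E: "1 \<le> E" unfolding E_def using \<alpha> \<gamma> by (intro pw_ge_one ge_one_powr_ge_zero) auto
  have const: "pointwise_const \<alpha> \<gamma> DIM('a) = E * E * K + 2 powr (real DIM('a) + \<alpha>) * E"
    unfolding pointwise_const_def E_def K_def by (simp add: algebra_simps)
  show ?thesis
  proof (cases "q \<alpha> s z y \<le> K * q \<alpha> t x y")
    case True
    have "E * E * K * \<Phi> * A \<le> E * E * K * \<Phi> * (A + B)"
      using nonneg by (intro mult_left_mono) auto
    also have "\<dots> \<le> pointwise_const \<alpha> \<gamma> DIM('a) * \<Phi> * (A + B)"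
      unfolding const using nonneg by (intro mult_right_mono) auto
    finally show ?thesis
      using convolution_integrand_le_near[OF \<alpha> \<gamma>(1) s True, of D]
      unfolding E_def \<Phi>_def A_def B_def by linarith
  next
    case False
    have "2 powr (real DIM('a) + \<alpha>) * E * \<Phi> * B \<le> 2 powr (real DIM('a) + \<alpha>) * E * \<Phi> * (A + B)"
      using nonneg by (intro mult_left_mono) auto
    also have "\<dots> \<le> pointwise_const \<alpha> \<gamma> DIM('a) * \<Phi> * (A + B)"
      unfolding const using nonneg E by (intro mult_right_mono) auto
    finally show ?thesis
      using convolution_integrand_le_far[OF \<alpha> \<gamma> s False[unfolded K_def], of D]
      unfolding E_def \<Phi>_def A_def B_def by linarith
  qed
qed

lemma convolution_integrand_le:
  fixes x y z :: "'a::euclidean_space"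
  assumes \<alpha>: "0 < \<alpha>" and \<gamma>: "0 \<le> \<gamma>" "\<gamma> \<le> \<alpha>" and s: "0 < s" "s < t"
  shows "psi \<alpha> \<gamma> D (t-s) x z * psi \<alpha> \<gamma> D s z y * q \<alpha> (t-s) x z * q \<alpha> s z y
    \<le> pointwise_const \<alpha> \<gamma> DIM('a) * (psi \<alpha> \<gamma> D t x y * q \<alpha> t x y) *
       (weighted_kernel \<alpha> \<gamma> D t x (t-s) z + boundary_kernel \<alpha> \<gamma> D y s z
        + weighted_kernel \<alpha> \<gamma> D t y s z + boundary_kernel \<alpha> \<gamma> D x (t-s) z)"
proof -
  define C where "C = pointwise_const \<alpha> \<gamma> DIM('a) * (psi \<alpha> \<gamma> D t x y * q \<alpha> t x y)"
  have C: "0 \<le> C" unfolding C_def psi_def using pointwise_const_pos[OF \<alpha> \<gamma>(1)] q_pos[of t \<alpha> x y] s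
    by (intro mult_nonneg_nonneg) (auto simp: pw_nonneg less_imp_le)
  have nonneg: "0 \<le> weighted_kernel \<alpha> \<gamma> D t x (t-s) z" "0 \<le> boundary_kernel \<alpha> \<gamma> D y s z"
    "0 \<le> weighted_kernel \<alpha> \<gamma> D t y s z" "0 \<le> boundary_kernel \<alpha> \<gamma> D x (t-s) z"
    using s by (auto intro!: weighted_kernel_nonneg boundary_kernel_nonneg)
  have "C * (weighted_kernel \<alpha> \<gamma> D t x (t-s) z + boundary_kernel \<alpha> \<gamma> D y s z)
      \<le> C * (weighted_kernel \<alpha> \<gamma> D t x (t-s) z + boundary_kernel \<alpha> \<gamma> D y s z
        + weighted_kernel \<alpha> \<gamma> D t y s z + boundary_kernel \<alpha> \<gamma> D x (t-s) z)"
    "C * (weighted_kernel \<alpha> \<gamma> D t y s z + boundary_kernel \<alpha> \<gamma> D x (t-s) z)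
      \<le> C * (weighted_kernel \<alpha> \<gamma> D t x (t-s) z + boundary_kernel \<alpha> \<gamma> D y s z
        + weighted_kernel \<alpha> \<gamma> D t y s z + boundary_kernel \<alpha> \<gamma> D x (t-s) z)"
    using nonneg C by (intro mult_left_mono; simp)+
  moreover have "psi \<alpha> \<gamma> D (t-s) x z * psi \<alpha> \<gamma> D s z y * q \<alpha> (t-s) x z * q \<alpha> s z y
      \<le> C * (weighted_kernel \<alpha> \<gamma> D t x (t-s) z + boundary_kernel \<alpha> \<gamma> D y s z)" if "t \<le> 2 * s"
    using convolution_integrand_le_second_half[OF \<alpha> \<gamma> s that, of D x z y] unfolding C_def .
  moreover have "psi \<alpha> \<gamma> D (t-s) x z * psi \<alpha> \<gamma> D s z y * q \<alpha> (t-s) x z * q \<alpha> s z y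
      \<le> C * (weighted_kernel \<alpha> \<gamma> D t y s z + boundary_kernel \<alpha> \<gamma> D x (t-s) z)" if "\<not> t \<le> 2 * s"
  proof -
    have "psi \<alpha> \<gamma> D (t-s) x z * psi \<alpha> \<gamma> D s z y * q \<alpha> (t-s) x z * q \<alpha> s z y
        = psi \<alpha> \<gamma> D (t-(t-s)) y z * psi \<alpha> \<gamma> D (t-s) z x * q \<alpha> (t-(t-s)) y z * q \<alpha> (t-s) z x"
      by (simp add: psi_commute[of _ _ _ _ z] q_commute[of _ _ z] ac_simps)
    also have "\<dots> \<le> C * (weighted_kernel \<alpha> \<gamma> D t y s z + boundary_kernel \<alpha> \<gamma> D x (t-s) z)"
      using convolution_integrand_le_second_half[OF \<alpha> \<gamma>, of "t-s" t D y z x] that s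
      unfolding C_def by (simp add: psi_commute[of _ _ _ _ y] q_commute[of _ _ y])
    finally show ?thesis .
  qed
  ultimately show ?thesis unfolding C_def by (cases "t \<le> 2 * s") (blast intro: order_trans)+
qed

section \<open>Integrating the weight in time\<close>

definition weight_const :: "real \<Rightarrow> real" where
  "weight_const \<alpha> = 2 + 2 powr (1/\<alpha>)"

lemma time_weight_le_const:
  fixes x z :: "'a::euclidean_space"
  assumes \<alpha>: "0 < \<alpha>" and t: "0 < t" and a: "0 < a" "min (dist x z powr \<alpha>) (t/2) \<le> a"
  shows "time_weight \<alpha> t a x z \<le> weight_const \<alpha>"
proof (cases "dist x z powr \<alpha> \<le> a")
  case True
  have "dist x z = (dist x z powr \<alpha>) powr (1/\<alpha>)" using \<alpha> by (simp add: powr_powr)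
  also have "\<dots> \<le> a powr (1/\<alpha>)" using True \<alpha> by (intro powr_mono2) auto
  finally have "dist x z / a powr (1/\<alpha>) \<le> 1" using a by simp
  then have "1 + dist x z / a powr (1/\<alpha>) \<le> weight_const \<alpha>"
    unfolding weight_const_def using powr_ge_zero[of 2 "1/\<alpha>"] by linarith
  then show ?thesis unfolding time_weight_def by simp
next
  case False
  then have "(t/a) powr (1/\<alpha>) \<le> 2 powr (1/\<alpha>)"
    using a \<alpha> t by (intro powr_mono2) (auto simp: field_simps)
  then show ?thesis unfolding time_weight_def weight_const_def by simp
qed

lemma time_weight_le_scaled:
  fixes x z :: "'a::euclidean_space"
  assumes \<alpha>: "0 < \<alpha>" and a: "0 < a" "a < m" and m: "m = min (dist x z powr \<alpha>) (t/2)"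
  shows "time_weight \<alpha> t a x z \<le> weight_const \<alpha> * (m/a) powr (1/\<alpha>)"
proof (cases "dist x z powr \<alpha> \<le> t/2")
  case True
  then have m: "m = dist x z powr \<alpha>" using m by simp
  then have "0 < dist x z" using a by (auto intro: ccontr)
  then have X: "(m/a) powr (1/\<alpha>) = dist x z / a powr (1/\<alpha>)"
    unfolding m using a \<alpha> by (simp add: powr_divide powr_powr)
  have "a powr (1/\<alpha>) \<le> dist x z"
    using powr_mono2[of "1/\<alpha>" a m] a \<alpha> \<open>0 < dist x z\<close> unfolding m by (simp add: powr_powr)
  then have "1 \<le> (m/a) powr (1/\<alpha>)" unfolding X using a by simp
  moreover have "weight_const \<alpha> * (m/a) powr (1/\<alpha>)
      = 2 * (m/a) powr (1/\<alpha>) + 2 powr (1/\<alpha>) * (m/a) powr (1/\<alpha>)"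
    unfolding weight_const_def by (simp add: distrib_right)
  moreover have "0 \<le> 2 powr (1/\<alpha>) * (m/a) powr (1/\<alpha>)" by simp
  ultimately have "1 + (m/a) powr (1/\<alpha>) \<le> weight_const \<alpha> * (m/a) powr (1/\<alpha>)" by linarith
  then show ?thesis unfolding time_weight_def X by simp
next
  case False
  then have "m = t/2" using m by simp
  then have "t/a = 2 * (m/a)" by simp
  then have "(t/a) powr (1/\<alpha>) = 2 powr (1/\<alpha>) * (m/a) powr (1/\<alpha>)"
    using a by (simp only: powr_mult)
  also have "\<dots> \<le> weight_const \<alpha> * (m/a) powr (1/\<alpha>)"
    unfolding weight_const_def by (intro mult_right_mono) auto
  finally show ?thesis unfolding time_weight_def by simp
qed

lemma powr_mult_powr_double:
  fixes m a e :: real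
  assumes "0 < m" "0 < a"
  shows "(m/a) powr e * (2*m/a) powr e * a = 2 powr e * m powr (2*e) * a powr (1 - 2*e)"
proof -
  have "(m/a) powr e * (2*m/a) powr e = 2 powr e * (m powr e * m powr e) / (a powr e * a powr e)"
    using assms by (simp add: powr_divide powr_mult)
  also have "\<dots> = 2 powr e * m powr (2*e) / a powr (2*e)"
    unfolding mult_2 powr_add by simp
  finally show ?thesis using assms by (simp add: powr_diff)
qed

lemma weighted_kernel_le_below_scale:
  fixes u z :: "'a::euclidean_space"
  assumes \<alpha>: "0 < \<alpha>" and \<gamma>: "0 \<le> \<gamma>"
    and m: "m = min (dist u z powr \<alpha>) (t/2)" and a: "0 < a" "a < m"
  shows "weighted_kernel \<alpha> \<gamma> D t u a z \<le> pw (weight_const \<alpha>) \<gamma> * 2 powr (\<gamma>/\<alpha>) * pw (bfac \<alpha> D (2*m) z) \<gamma>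
          * m powr (2*(\<gamma>/\<alpha>)) / dist u z powr (real DIM('a) + \<alpha>) * a powr (1 - 2*(\<gamma>/\<alpha>))"
proof -
  define P where "P = pw (weight_const \<alpha>) \<gamma>"
  have P: "1 \<le> P" unfolding P_def weight_const_def using \<gamma> by (intro pw_ge_one) auto
  have m0: "0 < m" "2 * m \<le> t" using a m by auto
  have "pw (time_weight \<alpha> t a u z) \<gamma> \<le> pw (weight_const \<alpha> * (m/a) powr (1/\<alpha>)) \<gamma>"
    using \<alpha> \<gamma> a m m0 by (intro pw_mono time_weight_le_scaled) (auto simp: time_weight_def)
  also have "\<dots> = P * (m/a) powr (\<gamma>/\<alpha>)"
    unfolding P_def weight_const_def using m0 a by (simp add: pw_mult pw_pos_eq_powr powr_powr)
  finally have pW: "pw (time_weight \<alpha> t a u z) \<gamma> \<le> P * (m/a) powr (\<gamma>/\<alpha>)" .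
  have "pw (bfac \<alpha> D a z) \<gamma> \<le> pw ((2*m/a) powr (1/\<alpha>) * bfac \<alpha> D (2*m) z) \<gamma>"
    using \<alpha> \<gamma> a by (intro pw_mono bfac_le_scaled bfac_nonneg) auto
  also have "\<dots> = (2*m/a) powr (\<gamma>/\<alpha>) * pw (bfac \<alpha> D (2*m) z) \<gamma>"
    using \<alpha> m0 a by (simp add: pw_mult pw_pos_eq_powr powr_powr bfac_nonneg)
  finally have pb: "pw (bfac \<alpha> D a z) \<gamma> \<le> (2*m/a) powr (\<gamma>/\<alpha>) * pw (bfac \<alpha> D (2*m) z) \<gamma>" .
  have "u \<noteq> z" using m a by (auto simp: powr_def)
  then have qb: "q \<alpha> a u z \<le> a / dist u z powr (real DIM('a) + \<alpha>)" by (rule q_le_far)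
  have "weighted_kernel \<alpha> \<gamma> D t u a z
      = pw (time_weight \<alpha> t a u z) \<gamma> * (pw (bfac \<alpha> D a z) \<gamma> * q \<alpha> a u z)"
    unfolding weighted_kernel_def boundary_kernel_def using a m0 by simp
  also have "\<dots> \<le> (P * (m/a) powr (\<gamma>/\<alpha>)) *
      ((2*m/a) powr (\<gamma>/\<alpha>) * pw (bfac \<alpha> D (2*m) z) \<gamma> * (a / dist u z powr (real DIM('a) + \<alpha>)))"
    using pW pb qb q_pos[OF a(1), of \<alpha> u z] P by (intro mult_mono) (auto simp: pw_nonneg)
  also have "\<dots> = P * pw (bfac \<alpha> D (2*m) z) \<gamma> / dist u z powr (real DIM('a) + \<alpha>) *
      ((m/a) powr (\<gamma>/\<alpha>) * (2*m/a) powr (\<gamma>/\<alpha>) * a)"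
    by (simp only: divide_inverse mult_ac)
  finally show ?thesis
    unfolding powr_mult_powr_double[OF m0(1) a(1)] P_def by (simp only: divide_inverse mult_ac)
qed

text \<open>Above the time scale m the weight is bounded; below it, the weight and the boundary
  factor together cost at most a power a^(1 - 2\<gamma>/\<alpha>), which is integrable at 0.\<close>
lemma weighted_kernel_le:
  fixes u z :: "'a::euclidean_space"
  assumes \<alpha>: "0 < \<alpha>" and \<gamma>: "0 \<le> \<gamma>" and t: "0 < t"
    and m: "m = min (dist u z powr \<alpha>) (t/2)" and a: "0 < a" "a < t"
  shows "weighted_kernel \<alpha> \<gamma> D t u a z \<le> pw (weight_const \<alpha>) \<gamma> * boundary_kernel \<alpha> \<gamma> D u a z
     + pw (weight_const \<alpha>) \<gamma> * 2 powr (\<gamma>/\<alpha>) * pw (bfac \<alpha> D (2*m) z) \<gamma>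
          * m powr (2*(\<gamma>/\<alpha>)) / dist u z powr (real DIM('a) + \<alpha>)
          * (a powr (1 - 2*(\<gamma>/\<alpha>)) * indicator {0..m} a)"
  (is "_ \<le> ?F + ?H * (?p * _)")
proof -
  have F: "0 \<le> ?F" using boundary_kernel_nonneg[OF a(1), of \<alpha> \<gamma> D u z] by (simp add: pw_nonneg)
  have H: "0 \<le> ?H * (?p * indicator {0..m} a)" by (simp add: pw_nonneg)
  consider "t/2 < a" | "a \<le> t/2" "m \<le> a" | "a < m" by linarith
  then show ?thesis
  proof cases
    case 1
    then have "weighted_kernel \<alpha> \<gamma> D t u a z = 0" unfolding weighted_kernel_def by simp
    then show ?thesis using F H by simp
  next
    case 2
    have "pw (time_weight \<alpha> t a u z) \<gamma> \<le> pw (weight_const \<alpha>) \<gamma>"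
      using \<alpha> \<gamma> t a 2 m by (intro pw_mono time_weight_le_const) (auto simp: time_weight_def)
    then have "weighted_kernel \<alpha> \<gamma> D t u a z \<le> ?F"
      unfolding weighted_kernel_def using 2 a boundary_kernel_nonneg[OF a(1), of \<alpha> \<gamma> D u z]
      by (simp add: mult_right_mono)
    then show ?thesis using H by simp
  next
    case 3
    then show ?thesis
      using weighted_kernel_le_below_scale[OF \<alpha> \<gamma> m a(1) 3, of D] F a by (simp add: indicator_def)
  qed
qed

lemma infdist_measurable[measurable]: "(\<lambda>z. infdist z S) \<in> borel_measurable borel"
  by (intro borel_measurable_continuous_onI continuous_intros)

lemma bfac_measurable[measurable (raw)]:
  fixes g :: "'b \<Rightarrow> 'a::euclidean_space"
  assumes [measurable]: "f \<in> borel_measurable M" "g \<in> borel_measurable M"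
  shows "(\<lambda>w. bfac \<alpha> D (f w) (g w)) \<in> borel_measurable M"
  unfolding bfac_def by measurable

lemma pw_measurable[measurable (raw)]:
  assumes [measurable]: "f \<in> borel_measurable M"
  shows "(\<lambda>w. pw (f w) \<gamma>) \<in> borel_measurable M"
  unfolding pw_def by measurable

lemma q_measurable[measurable (raw)]:
  fixes g h :: "'b \<Rightarrow> 'a::euclidean_space"
  assumes [measurable]: "f \<in> borel_measurable M" "g \<in> borel_measurable M" "h \<in> borel_measurable M"
  shows "(\<lambda>w. q \<alpha> (f w) (g w) (h w)) \<in> borel_measurable M"
  unfolding q_def by measurable

lemma boundary_kernel_measurable[measurable (raw)]:
  fixes g :: "'b \<Rightarrow> 'a::euclidean_space"
  assumes [measurable]: "f \<in> borel_measurable M" "g \<in> borel_measurable M"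
  shows "(\<lambda>w. boundary_kernel \<alpha> \<gamma> D u (f w) (g w)) \<in> borel_measurable M"
  unfolding boundary_kernel_def by measurable

lemma weighted_kernel_measurable[measurable (raw)]:
  fixes g :: "'b \<Rightarrow> 'a::euclidean_space"
  assumes [measurable]: "f \<in> borel_measurable M" "g \<in> borel_measurable M"
  shows "(\<lambda>w. weighted_kernel \<alpha> \<gamma> D t u (f w) (g w)) \<in> borel_measurable M"
  unfolding weighted_kernel_def time_weight_def by measurable

lemma boundary_kernel_time_integral_ge:
  fixes u z :: "'a::euclidean_space"
  assumes \<alpha>: "0 < \<alpha>" and \<gamma>: "0 \<le> \<gamma>" and "u \<noteq> z"
    and m: "0 < m" "2 * m \<le> t" "m \<le> dist u z powr \<alpha>"
  shows "ennreal (pw (bfac \<alpha> D (2*m) z) \<gamma> * (2 powr (- real DIM('a) / \<alpha>) * m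
            / dist u z powr (real DIM('a) + \<alpha>)) * m)
    \<le> (\<integral>\<^sup>+a. indicator {0<..<t} a * ennreal (boundary_kernel \<alpha> \<gamma> D u a z) \<partial>lborel)"
  (is "ennreal (?c * m) \<le> _")
proof -
  have c: "0 \<le> ?c" using m by (simp add: pw_nonneg)
  have "ennreal (?c * m) = ennreal ?c * ennreal m" using m c by (intro ennreal_mult) auto
  also have "\<dots> = (\<integral>\<^sup>+a. ennreal ?c * indicator {m..<2*m} a \<partial>lborel)"
    using m by (simp add: nn_integral_cmult_indicator)
  also have "\<dots> \<le> (\<integral>\<^sup>+a. indicator {0<..<t} a * ennreal (boundary_kernel \<alpha> \<gamma> D u a z) \<partial>lborel)"
  proof (intro nn_integral_mono)
    fix a
    show "ennreal ?c * indicator {m..<2*m} a \<le> indicator {0<..<t} a * ennreal (boundary_kernel \<alpha> \<gamma> D u a z)"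
    proof (cases "a \<in> {m..<2*m}")
      case True
      then have a: "0 < a" "a < t" "m \<le> a" "a \<le> 2*m" using m by auto
      have "?c \<le> boundary_kernel \<alpha> \<gamma> D u a z"
        unfolding boundary_kernel_def using assms a
        by (intro mult_mono pw_mono bfac_antimono bfac_nonneg q_lower_bound) (auto simp: pw_nonneg)
      then show ?thesis using True a by (simp add: ennreal_leI)
    qed simp
  qed
  finally show ?thesis .
qed

definition excess_const :: "real \<Rightarrow> real \<Rightarrow> nat \<Rightarrow> real" where
  "excess_const \<alpha> \<gamma> n = pw (weight_const \<alpha>) \<gamma> * 2 powr (\<gamma>/\<alpha>) * 2 powr (real n / \<alpha>) / (2 - 2*(\<gamma>/\<alpha>))"

definition time_const :: "real \<Rightarrow> real \<Rightarrow> nat \<Rightarrow> real" where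
  "time_const \<alpha> \<gamma> n = pw (weight_const \<alpha>) \<gamma> + excess_const \<alpha> \<gamma> n"

lemma excess_const_nonneg:
  assumes "0 < \<alpha>" "\<gamma> < \<alpha>"
  shows "0 \<le> excess_const \<alpha> \<gamma> n"
proof -
  have "\<gamma>/\<alpha> < 1" using assms by simp
  then show ?thesis unfolding excess_const_def by (simp add: pw_nonneg)
qed

lemma time_const_nonneg: "0 < \<alpha> \<Longrightarrow> \<gamma> < \<alpha> \<Longrightarrow> 0 \<le> time_const \<alpha> \<gamma> n"
  unfolding time_const_def using excess_const_nonneg by (simp add: pw_nonneg)

text \<open>The excess term of \<open>weighted_kernel_le\<close> integrates to a multiple of
  m^2 |u - z|^(-d-\<alpha>), which the kernel itself already provides on [m, 2m].\<close>
lemma excess_time_integral_le: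
  fixes u z :: "'a::euclidean_space"
  assumes \<alpha>: "0 < \<alpha>" and \<gamma>: "0 \<le> \<gamma>" "\<gamma> < \<alpha>" and t: "0 < t" and m_def: "m = min (dist u z powr \<alpha>) (t/2)"
  shows "ennreal (pw (weight_const \<alpha>) \<gamma> * 2 powr (\<gamma>/\<alpha>) * pw (bfac \<alpha> D (2*m) z) \<gamma>
          * m powr (2*(\<gamma>/\<alpha>)) / dist u z powr (real DIM('a) + \<alpha>))
        * (\<integral>\<^sup>+a. ennreal (a powr (1 - 2*(\<gamma>/\<alpha>))) * indicator {0..m} a \<partial>lborel)
    \<le> ennreal (excess_const \<alpha> \<gamma> DIM('a))
        * (\<integral>\<^sup>+a. indicator {0<..<t} a * ennreal (boundary_kernel \<alpha> \<gamma> D u a z) \<partial>lborel)"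
proof -
  define e where "e = \<gamma>/\<alpha>"
  define d where "d = real DIM('a)"
  define r where "r = dist u z"
  define H where "H = pw (weight_const \<alpha>) \<gamma> * 2 powr e * pw (bfac \<alpha> D (2*m) z) \<gamma> * m powr (2*e) / r powr (d + \<alpha>)"
  define K where "K = excess_const \<alpha> \<gamma> DIM('a)"
  have e: "0 \<le> e" "e < 1" using \<alpha> \<gamma> by (auto simp: e_def)
  have m: "0 \<le> m" "2 * m \<le> t" "m \<le> r powr \<alpha>" using t by (auto simp: m_def r_def)
  have HK: "0 \<le> H" "0 \<le> K" unfolding H_def K_def using \<alpha> \<gamma> by (auto simp: pw_nonneg excess_const_nonneg)
  have "(\<integral>\<^sup>+a. ennreal (a powr (1 - 2*e)) * indicator {0..m} a \<partial>lborel)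
      = ennreal (m powr (1 - 2*e + 1) / (1 - 2*e + 1))"
    using e m by (intro nn_integral_has_integral_lebesgue' has_integral_powr_from_0) auto
  moreover have "ennreal H * ennreal (m powr (1 - 2*e + 1) / (1 - 2*e + 1))
      \<le> ennreal K * (\<integral>\<^sup>+a. indicator {0<..<t} a * ennreal (boundary_kernel \<alpha> \<gamma> D u a z) \<partial>lborel)"
  proof (cases "m = 0")
    case False
    then have "u \<noteq> z" "0 < m" using m t by (auto simp: m_def r_def)
    define c where "c = pw (bfac \<alpha> D (2*m) z) \<gamma> * (2 powr (- d / \<alpha>) * m / r powr (d + \<alpha>))"
    have c: "0 \<le> c" unfolding c_def using \<open>0 < m\<close> by (simp add: pw_nonneg)
    have "H * (m powr (1 - 2*e + 1) / (1 - 2*e + 1)) = K * (c * m)"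
    proof -
      have "m powr (2*e) * m powr (1 - 2*e + 1) = m * m"
        using \<open>0 < m\<close> by (simp add: powr_add[symmetric] power2_eq_square)
      moreover have "2 powr (d/\<alpha>) * 2 powr (- d / \<alpha>) = (1::real)"
        by (simp add: powr_add[symmetric])
      ultimately show ?thesis unfolding H_def K_def c_def excess_const_def e_def d_def using e \<open>0 < m\<close>
        by (simp add: field_simps)
    qed
    then have "ennreal H * ennreal (m powr (1 - 2*e + 1) / (1 - 2*e + 1)) = ennreal K * ennreal (c * m)"
      using HK c e \<open>0 < m\<close> by (simp add: ennreal_mult[symmetric])
    also have "\<dots> \<le> ennreal K * (\<integral>\<^sup>+a. indicator {0<..<t} a * ennreal (boundary_kernel \<alpha> \<gamma> D u a z) \<partial>lborel)"
      unfolding c_def d_def r_def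
      using boundary_kernel_time_integral_ge[OF \<alpha> \<gamma>(1) \<open>u \<noteq> z\<close> \<open>0 < m\<close>] m
      by (intro mult_left_mono) (auto simp: r_def)
    finally show ?thesis .
  qed simp
  ultimately show ?thesis unfolding H_def K_def e_def d_def r_def by simp
qed

lemma weighted_kernel_time_integral_le:
  fixes u z :: "'a::euclidean_space"
  assumes \<alpha>: "0 < \<alpha>" and \<gamma>: "0 \<le> \<gamma>" "\<gamma> < \<alpha>" and t: "0 < t"
  shows "(\<integral>\<^sup>+a. indicator {0<..<t} a * ennreal (weighted_kernel \<alpha> \<gamma> D t u a z) \<partial>lborel)
    \<le> ennreal (time_const \<alpha> \<gamma> DIM('a))
        * (\<integral>\<^sup>+a. indicator {0<..<t} a * ennreal (boundary_kernel \<alpha> \<gamma> D u a z) \<partial>lborel)"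
proof -
  define I where "I = (\<integral>\<^sup>+a. indicator {0<..<t} a * ennreal (boundary_kernel \<alpha> \<gamma> D u a z) \<partial>lborel)"
  define P where "P = pw (weight_const \<alpha>) \<gamma>"
  define m where "m = min (dist u z powr \<alpha>) (t/2)"
  define H where "H = P * 2 powr (\<gamma>/\<alpha>) * pw (bfac \<alpha> D (2*m) z) \<gamma>
    * m powr (2*(\<gamma>/\<alpha>)) / dist u z powr (real DIM('a) + \<alpha>)"
  define g where "g a = a powr (1 - 2*(\<gamma>/\<alpha>))" for a :: real
  have P: "0 \<le> P" unfolding P_def by (rule pw_nonneg)
  have H: "0 \<le> H" unfolding H_def by (simp add: pw_nonneg P)
  have "indicator {0<..<t} a * ennreal (weighted_kernel \<alpha> \<gamma> D t u a z)
      \<le> ennreal P * (indicator {0<..<t} a * ennreal (boundary_kernel \<alpha> \<gamma> D u a z))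
        + ennreal H * (ennreal (g a) * indicator {0..m} a)" for a
  proof (cases "a \<in> {0<..<t}")
    case True
    have f: "0 \<le> boundary_kernel \<alpha> \<gamma> D u a z" using True by (intro boundary_kernel_nonneg) auto
    have "weighted_kernel \<alpha> \<gamma> D t u a z \<le> P * boundary_kernel \<alpha> \<gamma> D u a z + H * (g a * indicator {0..m} a)"
      using weighted_kernel_le[OF \<alpha> \<gamma>(1) t m_def, of a D] True unfolding P_def H_def g_def by simp
    then have "ennreal (weighted_kernel \<alpha> \<gamma> D t u a z)
        \<le> ennreal (P * boundary_kernel \<alpha> \<gamma> D u a z) + ennreal (H * (g a * indicator {0..m} a))"
      using P f H by (simp add: g_def ennreal_plus[symmetric] ennreal_leI del: ennreal_plus)
    then show ?thesis
      using True P f H by (cases "a \<le> m") (simp_all add: g_def ennreal_mult indicator_def)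
  qed simp
  then have "(\<integral>\<^sup>+a. indicator {0<..<t} a * ennreal (weighted_kernel \<alpha> \<gamma> D t u a z) \<partial>lborel)
      \<le> (\<integral>\<^sup>+a. ennreal P * (indicator {0<..<t} a * ennreal (boundary_kernel \<alpha> \<gamma> D u a z))
          + ennreal H * (ennreal (g a) * indicator {0..m} a) \<partial>lborel)"
    by (intro nn_integral_mono)
  also have "\<dots> = ennreal P * I + ennreal H * (\<integral>\<^sup>+a. ennreal (g a) * indicator {0..m} a \<partial>lborel)"
    unfolding I_def g_def by (simp add: nn_integral_add nn_integral_cmult)
  also have "\<dots> \<le> ennreal P * I + ennreal (excess_const \<alpha> \<gamma> DIM('a)) * I"
    using excess_time_integral_le[OF \<alpha> \<gamma> t m_def, of D] unfolding H_def P_def I_def g_def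
    by (rule add_left_mono)
  also have "\<dots> = ennreal (time_const \<alpha> \<gamma> DIM('a)) * I"
    unfolding time_const_def P_def using excess_const_nonneg[OF \<alpha> \<gamma>(2)]
    by (simp add: ennreal_plus pw_nonneg distrib_right)
  finally show ?thesis unfolding I_def .
qed

section \<open>Integration in space and time\<close>

definition boundary_potential ::
    "real \<Rightarrow> real \<Rightarrow> 'a::euclidean_space set \<Rightarrow> real \<Rightarrow> 'a measure \<Rightarrow> 'a \<Rightarrow> ennreal" where
  "boundary_potential \<alpha> \<gamma> D t N u =
     (\<integral>\<^sup>+s. indicator {0<..<t} s * (\<integral>\<^sup>+z. indicator D z * ennreal (boundary_kernel \<alpha> \<gamma> D u s z) \<partial>N) \<partial>lborel)"

definition convolution_integral ::
    "real \<Rightarrow> real \<Rightarrow> 'a::euclidean_space set \<Rightarrow> real \<Rightarrow> 'a measure \<Rightarrow> 'a \<Rightarrow> 'a \<Rightarrow> ennreal" where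
  "convolution_integral \<alpha> \<gamma> D t N x y =
     (\<integral>\<^sup>+s. indicator {0<..<t} s * (\<integral>\<^sup>+z. indicator D z * ennreal (psi \<alpha> \<gamma> D (t - s) x z
        * psi \<alpha> \<gamma> D s z y * q \<alpha> (t - s) x z * q \<alpha> s z y) \<partial>N) \<partial>lborel)"

definition convolution_const :: "real \<Rightarrow> real \<Rightarrow> nat \<Rightarrow> real" where
  "convolution_const \<alpha> \<gamma> n = pointwise_const \<alpha> \<gamma> n * (2 + 2 * time_const \<alpha> \<gamma> n)"

lemma convolution_const_pos: "0 < \<alpha> \<Longrightarrow> 0 \<le> \<gamma> \<Longrightarrow> \<gamma> < \<alpha> \<Longrightarrow> 0 < convolution_const \<alpha> \<gamma> n"
  unfolding convolution_const_def
  using pointwise_const_pos time_const_nonneg by (simp add: add_pos_nonneg)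

lemma psi_measurable[measurable (raw)]:
  fixes g h :: "'b \<Rightarrow> 'a::euclidean_space"
  assumes [measurable]: "f \<in> borel_measurable M" "g \<in> borel_measurable M" "h \<in> borel_measurable M"
  shows "(\<lambda>w. psi \<alpha> \<gamma> D (f w) (g w) (h w)) \<in> borel_measurable M"
  unfolding psi_def by measurable

lemma weighted_kernel_potential_le:
  fixes u :: "'a::euclidean_space"
  assumes "sigma_finite_measure N" and sets_N: "sets N = sets borel" and [measurable]: "D \<in> sets borel"
    and \<alpha>: "0 < \<alpha>" and \<gamma>: "0 \<le> \<gamma>" "\<gamma> < \<alpha>" and t: "0 < t"
  shows "(\<integral>\<^sup>+a. indicator {0<..<t} a * (\<integral>\<^sup>+z. indicator D z * ennreal (weighted_kernel \<alpha> \<gamma> D t u a z) \<partial>N) \<partial>lborel)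
    \<le> ennreal (time_const \<alpha> \<gamma> DIM('a)) * boundary_potential \<alpha> \<gamma> D t N u"
proof -
  interpret N: sigma_finite_measure N by fact
  interpret pair_sigma_finite lborel N
    by (intro pair_sigma_finite.intro lborel.sigma_finite_measure_axioms assms(1))
  note sets_N[measurable_cong]
  define F where "F a z = indicator {0<..<t} a * (indicator D z * ennreal (weighted_kernel \<alpha> \<gamma> D t u a z))" for a z
  define G where "G a z = indicator {0<..<t} a * (indicator D z * ennreal (boundary_kernel \<alpha> \<gamma> D u a z))" for a z
  have [measurable]: "case_prod F \<in> borel_measurable (lborel \<Otimes>\<^sub>M N)" "case_prod G \<in> borel_measurable (lborel \<Otimes>\<^sub>M N)"
    unfolding F_def G_def by measurable
  have "(\<integral>\<^sup>+a. indicator {0<..<t} a * (\<integral>\<^sup>+z. indicator D z * ennreal (weighted_kernel \<alpha> \<gamma> D t u a z) \<partial>N) \<partial>lborel)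
      = (\<integral>\<^sup>+a. (\<integral>\<^sup>+z. F a z \<partial>N) \<partial>lborel)"
    unfolding F_def by (intro nn_integral_cong) (simp add: nn_integral_cmult)
  also have "\<dots> = (\<integral>\<^sup>+z. (\<integral>\<^sup>+a. F a z \<partial>lborel) \<partial>N)" by (rule Fubini'[symmetric]) measurable
  also have "\<dots> \<le> (\<integral>\<^sup>+z. ennreal (time_const \<alpha> \<gamma> DIM('a)) * (\<integral>\<^sup>+a. G a z \<partial>lborel) \<partial>N)"
  proof (intro nn_integral_mono)
    fix z
    have "(\<integral>\<^sup>+a. F a z \<partial>lborel)
        = indicator D z * (\<integral>\<^sup>+a. indicator {0<..<t} a * ennreal (weighted_kernel \<alpha> \<gamma> D t u a z) \<partial>lborel)"
      unfolding F_def by (subst nn_integral_cmult[symmetric]) (auto intro!: nn_integral_cong simp: mult_ac)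
    also have "\<dots> \<le> indicator D z * (ennreal (time_const \<alpha> \<gamma> DIM('a))
        * (\<integral>\<^sup>+a. indicator {0<..<t} a * ennreal (boundary_kernel \<alpha> \<gamma> D u a z) \<partial>lborel))"
      by (intro mult_left_mono weighted_kernel_time_integral_le \<alpha> \<gamma> t) auto
    also have "\<dots> = ennreal (time_const \<alpha> \<gamma> DIM('a)) * (\<integral>\<^sup>+a. G a z \<partial>lborel)"
    proof -
      have "(\<integral>\<^sup>+a. G a z \<partial>lborel)
          = indicator D z * (\<integral>\<^sup>+a. indicator {0<..<t} a * ennreal (boundary_kernel \<alpha> \<gamma> D u a z) \<partial>lborel)"
        unfolding G_def by (subst nn_integral_cmult[symmetric]) (auto intro!: nn_integral_cong simp: mult_ac)
      then show ?thesis by (simp add: mult_ac)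
    qed
    finally show "(\<integral>\<^sup>+a. F a z \<partial>lborel) \<le> ennreal (time_const \<alpha> \<gamma> DIM('a)) * (\<integral>\<^sup>+a. G a z \<partial>lborel)" .
  qed
  also have "\<dots> = ennreal (time_const \<alpha> \<gamma> DIM('a)) * (\<integral>\<^sup>+z. (\<integral>\<^sup>+a. G a z \<partial>lborel) \<partial>N)"
    by (rule nn_integral_cmult) measurable
  also have "(\<integral>\<^sup>+z. (\<integral>\<^sup>+a. G a z \<partial>lborel) \<partial>N) = (\<integral>\<^sup>+a. (\<integral>\<^sup>+z. G a z \<partial>N) \<partial>lborel)"
    by (rule Fubini') measurable
  also have "\<dots> = boundary_potential \<alpha> \<gamma> D t N u"
    unfolding G_def boundary_potential_def by (intro nn_integral_cong) (simp add: nn_integral_cmult)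
  finally show ?thesis .
qed

lemma nn_integral_interval_reflect:
  fixes g :: "real \<Rightarrow> ennreal"
  assumes [measurable]: "g \<in> borel_measurable borel"
  shows "(\<integral>\<^sup>+s. indicator {0<..<t} s * g (t - s) \<partial>lborel) = (\<integral>\<^sup>+s. indicator {0<..<t} s * g s \<partial>lborel)"
proof -
  have "(\<integral>\<^sup>+s. indicator {0<..<t} s * g s \<partial>lborel)
      = ennreal \<bar>-1\<bar> * (\<integral>\<^sup>+s. indicator {0<..<t} (t + -1 * s) * g (t + -1 * s) \<partial>lborel)"
    by (rule nn_integral_real_affine) auto
  also have "\<dots> = (\<integral>\<^sup>+s. indicator {0<..<t} s * g (t - s) \<partial>lborel)"
    by (auto intro!: nn_integral_cong simp: indicator_def)
  finally show ?thesis ..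
qed

lemma convolution_inner_integral_le:
  fixes x y :: "'a::euclidean_space"
  assumes sets_N: "sets N = sets borel" and [measurable]: "D \<in> sets borel"
    and \<alpha>: "0 < \<alpha>" and \<gamma>: "0 \<le> \<gamma>" "\<gamma> < \<alpha>" and s: "0 < s" "s < t"
  shows "(\<integral>\<^sup>+z. indicator D z * ennreal (psi \<alpha> \<gamma> D (t - s) x z * psi \<alpha> \<gamma> D s z y
        * q \<alpha> (t - s) x z * q \<alpha> s z y) \<partial>N)
    \<le> ennreal (pointwise_const \<alpha> \<gamma> DIM('a) * (psi \<alpha> \<gamma> D t x y * q \<alpha> t x y)) *
       ((\<integral>\<^sup>+z. indicator D z * ennreal (weighted_kernel \<alpha> \<gamma> D t x (t-s) z) \<partial>N)
        + (\<integral>\<^sup>+z. indicator D z * ennreal (boundary_kernel \<alpha> \<gamma> D y s z) \<partial>N)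
        + (\<integral>\<^sup>+z. indicator D z * ennreal (weighted_kernel \<alpha> \<gamma> D t y s z) \<partial>N)
        + (\<integral>\<^sup>+z. indicator D z * ennreal (boundary_kernel \<alpha> \<gamma> D x (t-s) z) \<partial>N))"
proof -
  note sets_N[measurable_cong]
  define c where "c = pointwise_const \<alpha> \<gamma> DIM('a) * (psi \<alpha> \<gamma> D t x y * q \<alpha> t x y)"
  have c: "0 \<le> c" unfolding c_def psi_def using pointwise_const_pos[OF \<alpha> \<gamma>(1)] q_pos[of t \<alpha> x y] s
    by (intro mult_nonneg_nonneg) (auto simp: pw_nonneg less_imp_le)
  have "indicator D z * ennreal (psi \<alpha> \<gamma> D (t - s) x z * psi \<alpha> \<gamma> D s z y * q \<alpha> (t - s) x z * q \<alpha> s z y)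
      \<le> ennreal c * (indicator D z * ennreal (weighted_kernel \<alpha> \<gamma> D t x (t-s) z)
        + indicator D z * ennreal (boundary_kernel \<alpha> \<gamma> D y s z)
        + indicator D z * ennreal (weighted_kernel \<alpha> \<gamma> D t y s z)
        + indicator D z * ennreal (boundary_kernel \<alpha> \<gamma> D x (t-s) z))" for z
  proof -
    have nonneg: "0 \<le> weighted_kernel \<alpha> \<gamma> D t x (t-s) z" "0 \<le> boundary_kernel \<alpha> \<gamma> D y s z"
      "0 \<le> weighted_kernel \<alpha> \<gamma> D t y s z" "0 \<le> boundary_kernel \<alpha> \<gamma> D x (t-s) z"
      using s by (auto intro!: weighted_kernel_nonneg boundary_kernel_nonneg)
    have "ennreal (psi \<alpha> \<gamma> D (t - s) x z * psi \<alpha> \<gamma> D s z y * q \<alpha> (t - s) x z * q \<alpha> s z y)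
        \<le> ennreal (c * (weighted_kernel \<alpha> \<gamma> D t x (t-s) z + boundary_kernel \<alpha> \<gamma> D y s z
            + weighted_kernel \<alpha> \<gamma> D t y s z + boundary_kernel \<alpha> \<gamma> D x (t-s) z))"
      unfolding c_def using convolution_integrand_le[OF \<alpha> \<gamma>(1) _ s, of D x z y] \<gamma>
      by (intro ennreal_leI) (simp add: mult.assoc)
    then show ?thesis
      using c nonneg by (cases "z \<in> D") (simp_all add: ennreal_mult ennreal_plus[symmetric] del: ennreal_plus)
  qed
  then have "(\<integral>\<^sup>+z. indicator D z * ennreal (psi \<alpha> \<gamma> D (t - s) x z * psi \<alpha> \<gamma> D s z y
        * q \<alpha> (t - s) x z * q \<alpha> s z y) \<partial>N)
      \<le> (\<integral>\<^sup>+z. ennreal c * (indicator D z * ennreal (weighted_kernel \<alpha> \<gamma> D t x (t-s) z)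
        + indicator D z * ennreal (boundary_kernel \<alpha> \<gamma> D y s z)
        + indicator D z * ennreal (weighted_kernel \<alpha> \<gamma> D t y s z)
        + indicator D z * ennreal (boundary_kernel \<alpha> \<gamma> D x (t-s) z)) \<partial>N)"
    by (intro nn_integral_mono)
  also have "\<dots> = ennreal c *
       ((\<integral>\<^sup>+z. indicator D z * ennreal (weighted_kernel \<alpha> \<gamma> D t x (t-s) z) \<partial>N)
        + (\<integral>\<^sup>+z. indicator D z * ennreal (boundary_kernel \<alpha> \<gamma> D y s z) \<partial>N)
        + (\<integral>\<^sup>+z. indicator D z * ennreal (weighted_kernel \<alpha> \<gamma> D t y s z) \<partial>N)
        + (\<integral>\<^sup>+z. indicator D z * ennreal (boundary_kernel \<alpha> \<gamma> D x (t-s) z) \<partial>N))"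
    by (simp add: nn_integral_add nn_integral_cmult)
  finally show ?thesis unfolding c_def .
qed

lemma convolution_integral_le_potentials:
  fixes x y :: "'a::euclidean_space"
  assumes "sigma_finite_measure N" and sets_N: "sets N = sets borel" and [measurable]: "D \<in> sets borel"
    and \<alpha>: "0 < \<alpha>" and \<gamma>: "0 \<le> \<gamma>" "\<gamma> < \<alpha>" and t: "0 < t"
  shows "convolution_integral \<alpha> \<gamma> D t N x y
    \<le> ennreal (pointwise_const \<alpha> \<gamma> DIM('a) * (psi \<alpha> \<gamma> D t x y * q \<alpha> t x y)) *
       (ennreal (time_const \<alpha> \<gamma> DIM('a)) * boundary_potential \<alpha> \<gamma> D t N x + boundary_potential \<alpha> \<gamma> D t N y
        + ennreal (time_const \<alpha> \<gamma> DIM('a)) * boundary_potential \<alpha> \<gamma> D t N y + boundary_potential \<alpha> \<gamma> D t N x)"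
proof -
  interpret N: sigma_finite_measure N by fact
  note sets_N[measurable_cong]
  define c where "c = pointwise_const \<alpha> \<gamma> DIM('a) * (psi \<alpha> \<gamma> D t x y * q \<alpha> t x y)"
  define A where "A u a = (\<integral>\<^sup>+z. indicator D z * ennreal (weighted_kernel \<alpha> \<gamma> D t u a z) \<partial>N)" for u a
  define B where "B u a = (\<integral>\<^sup>+z. indicator D z * ennreal (boundary_kernel \<alpha> \<gamma> D u a z) \<partial>N)" for u a
  have [measurable]: "A u \<in> borel_measurable borel" "B u \<in> borel_measurable borel" for u
    unfolding A_def B_def by measurable
  have "convolution_integral \<alpha> \<gamma> D t N x y
      \<le> (\<integral>\<^sup>+s. ennreal c * (indicator {0<..<t} s * A x (t - s) + indicator {0<..<t} s * B y s
          + indicator {0<..<t} s * A y s + indicator {0<..<t} s * B x (t - s)) \<partial>lborel)"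
    unfolding convolution_integral_def
    using convolution_inner_integral_le[OF sets_N assms(3) \<alpha> \<gamma>, of _ t x y]
    by (intro nn_integral_mono) (auto simp: A_def B_def c_def indicator_def)
  also have "\<dots> = ennreal c * ((\<integral>\<^sup>+s. indicator {0<..<t} s * A x (t - s) \<partial>lborel)
      + (\<integral>\<^sup>+s. indicator {0<..<t} s * B y s \<partial>lborel) + (\<integral>\<^sup>+s. indicator {0<..<t} s * A y s \<partial>lborel)
      + (\<integral>\<^sup>+s. indicator {0<..<t} s * B x (t - s) \<partial>lborel))"
    by (simp add: nn_integral_add nn_integral_cmult)
  also have "\<dots> \<le> ennreal c * (ennreal (time_const \<alpha> \<gamma> DIM('a)) * boundary_potential \<alpha> \<gamma> D t N x
      + boundary_potential \<alpha> \<gamma> D t N y + ennreal (time_const \<alpha> \<gamma> DIM('a)) * boundary_potential \<alpha> \<gamma> D t N y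
      + boundary_potential \<alpha> \<gamma> D t N x)"
  proof -
    have "(\<integral>\<^sup>+s. indicator {0<..<t} s * A x (t - s) \<partial>lborel) = (\<integral>\<^sup>+s. indicator {0<..<t} s * A x s \<partial>lborel)"
      "(\<integral>\<^sup>+s. indicator {0<..<t} s * B x (t - s) \<partial>lborel) = (\<integral>\<^sup>+s. indicator {0<..<t} s * B x s \<partial>lborel)"
      by (rule nn_integral_interval_reflect, measurable)+
    then show ?thesis
      using weighted_kernel_potential_le[OF assms, of x] weighted_kernel_potential_le[OF assms, of y]
      unfolding A_def B_def boundary_potential_def by (intro mult_left_mono add_mono) auto
  qed
  finally show ?thesis unfolding c_def .
qed

section \<open>Reduction to a sigma-finite measure\<close>

lemma nn_integral_density_indicator_eq:
  fixes h :: "'a::euclidean_space \<Rightarrow> ennreal"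
  assumes sets_M: "sets M = sets borel" and [measurable]: "P \<in> sets borel" "h \<in> borel_measurable borel"
    and vanish: "\<And>z. z \<notin> P \<Longrightarrow> h z = 0"
  shows "(\<integral>\<^sup>+z. h z \<partial>density M (indicator P)) = (\<integral>\<^sup>+z. h z \<partial>M)"
proof -
  note sets_M[measurable_cong]
  have "(\<integral>\<^sup>+z. h z \<partial>density M (indicator P)) = (\<integral>\<^sup>+z. indicator P z * h z \<partial>M)"
    by (rule nn_integral_density) measurable
  also have "\<dots> = (\<integral>\<^sup>+z. h z \<partial>M)"
    by (intro nn_integral_cong) (auto simp: indicator_def vanish)
  finally show ?thesis .
qed

lemma time_integral_density_indicator_eq:
  fixes h :: "real \<Rightarrow> 'a::euclidean_space \<Rightarrow> ennreal"
  assumes "sets M = sets borel" "P \<in> sets borel" "\<And>s. h s \<in> borel_measurable borel"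
    and "\<And>s z. s \<in> {0<..<t} \<Longrightarrow> z \<notin> P \<Longrightarrow> h s z = 0"
  shows "(\<integral>\<^sup>+s. indicator {0<..<t} s * (\<integral>\<^sup>+z. h s z \<partial>density M (indicator P)) \<partial>lborel)
       = (\<integral>\<^sup>+s. indicator {0<..<t} s * (\<integral>\<^sup>+z. h s z \<partial>M) \<partial>lborel)"
proof (intro nn_integral_cong)
  fix s
  show "indicator {0<..<t} s * (\<integral>\<^sup>+z. h s z \<partial>density M (indicator P))
      = indicator {0<..<t} s * (\<integral>\<^sup>+z. h s z \<partial>M)"
  proof (cases "s \<in> {0<..<t}")
    case True
    then show ?thesis using nn_integral_density_indicator_eq[OF assms(1-3), of s] assms(4) by simp
  qed simp
qed

lemma emeasure_density_indicator_level_set_finite: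
  fixes g :: "'a::euclidean_space \<Rightarrow> real"
  assumes sets_M: "sets M = sets borel" and [measurable]: "P \<in> sets borel" "g \<in> borel_measurable borel"
    and c: "0 < c" and finite: "(\<integral>\<^sup>+z. indicator P z * ennreal (g z) \<partial>M) < \<infinity>"
  shows "emeasure (density M (indicator P)) {z \<in> P. c \<le> g z} < \<infinity>"
proof -
  note sets_M[measurable_cong]
  have "emeasure (density M (indicator P)) {z \<in> P. c \<le> g z}
      = (\<integral>\<^sup>+z. indicator P z * indicator {z \<in> P. c \<le> g z} z \<partial>M)"
    by (rule emeasure_density) measurable
  also have "\<dots> \<le> (\<integral>\<^sup>+z. ennreal (1 / c) * (indicator P z * ennreal (g z)) \<partial>M)"
  proof (intro nn_integral_mono)
    fix z
    show "indicator P z * indicator {z \<in> P. c \<le> g z} z \<le> ennreal (1 / c) * (indicator P z * ennreal (g z))"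
    proof (cases "z \<in> P \<and> c \<le> g z")
      case True
      then have "ennreal 1 \<le> ennreal (1 / c * g z)" using c by (intro ennreal_leI) (simp add: field_simps)
      then have "1 \<le> ennreal (1 / c) * ennreal (g z)" using c by (subst ennreal_mult[symmetric]) auto
      then show ?thesis using True by (simp add: indicator_def)
    qed (auto simp: indicator_def)
  qed
  also have "\<dots> = ennreal (1 / c) * (\<integral>\<^sup>+z. indicator P z * ennreal (g z) \<partial>M)"
    by (rule nn_integral_cmult) measurable
  also have "\<dots> < \<infinity>" using finite by (simp add: ennreal_mult_less_top)
  finally show ?thesis .
qed

text \<open>The set where g is positive is covered by the level sets {g \<ge> 1/(n+1)}.\<close>
lemma sigma_finite_density_indicator:
  fixes g :: "'a::euclidean_space \<Rightarrow> real"
  assumes sets_M: "sets M = sets borel" and [measurable]: "P \<in> sets borel" "g \<in> borel_measurable borel"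
    and pos: "\<And>z. z \<in> P \<Longrightarrow> 0 < g z"
    and finite: "(\<integral>\<^sup>+z. indicator P z * ennreal (g z) \<partial>M) < \<infinity>"
  shows "sigma_finite_measure (density M (indicator P))"
proof -
  note sets_M[measurable_cong]
  define Q where "Q n = {z \<in> P. 1 / real (Suc n) \<le> g z}" for n
  have Q[measurable]: "Q n \<in> sets borel" for n unfolding Q_def by measurable
  define A where "A = insert (- P) (range Q)"
  have sets_density: "sets (density M (indicator P)) = sets borel" using sets_M by simp
  have space: "space (density M (indicator P)) = UNIV"
    using sets_eq_imp_space_eq[OF sets_density] by simp
  show ?thesis
  proof (unfold_locales, intro exI[of _ A] conjI)
    show "countable A" unfolding A_def by simp
    show "A \<subseteq> sets (density M (indicator P))" unfolding A_def sets_density by auto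
    have "z \<in> \<Union> A" for z
    proof (cases "z \<in> P")
      case True
      then obtain n where "inverse (real (Suc n)) < g z" using pos reals_Archimedean by blast
      then have "z \<in> Q n" using True unfolding Q_def by (simp add: inverse_eq_divide)
      then show ?thesis unfolding A_def by auto
    qed (auto simp: A_def)
    then show "\<Union> A = space (density M (indicator P))" unfolding space by auto
    have "emeasure (density M (indicator P)) (- P) = (\<integral>\<^sup>+z. indicator P z * indicator (- P) z \<partial>M)"
      by (rule emeasure_density) measurable
    also have "\<dots> = (\<integral>\<^sup>+z. 0 \<partial>M)" by (intro nn_integral_cong) (simp add: indicator_def)
    finally have "emeasure (density M (indicator P)) (- P) = 0" by simp
    moreover have "emeasure (density M (indicator P)) (Q n) < \<infinity>" for n
      unfolding Q_def using sets_M finite by (intro emeasure_density_indicator_level_set_finite) auto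
    ultimately show "\<forall>a\<in>A. emeasure (density M (indicator P)) a \<noteq> \<infinity>"
      unfolding A_def by (auto simp: less_top)
  qed
qed

lemma nn_integral_interval_finite_imp:
  fixes G :: "real \<Rightarrow> ennreal"
  assumes "(\<integral>\<^sup>+s. indicator {0<..<t} s * G s \<partial>lborel) < \<infinity>" and "0 < t"
  shows "\<exists>s\<in>{0<..<t}. G s < \<infinity>"
proof (rule ccontr)
  assume none: "\<not> ?thesis"
  then have "G s = \<infinity>" if "s \<in> {0<..<t}" for s
    using that none by (auto simp: less_top[symmetric])
  then have "(\<integral>\<^sup>+s. indicator {0<..<t} s * G s \<partial>lborel) = (\<integral>\<^sup>+s. \<infinity> * indicator {0<..<t} s \<partial>lborel)"
    by (intro nn_integral_cong) (auto simp: indicator_def)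
  also have "\<dots> = \<infinity> * emeasure lborel {0<..<t}" by (rule nn_integral_cmult_indicator) simp
  also have "\<dots> = \<infinity>" using \<open>0 < t\<close> by (simp add: ennreal_top_mult)
  finally show False using assms(1) by simp
qed

definition positivity_set :: "real \<Rightarrow> 'a::euclidean_space set \<Rightarrow> 'a set" where
  "positivity_set \<gamma> D = {z \<in> D. \<gamma> = 0 \<or> - D = {} \<or> infdist z (- D) \<noteq> 0}"

lemma positivity_set_measurable[measurable]:
  assumes "D \<in> sets borel"
  shows "positivity_set \<gamma> D \<in> sets borel"
proof -
  have "{z::'a. infdist z (- D) \<noteq> 0} \<in> sets borel" by measurable
  then show ?thesis
    unfolding positivity_set_def using assms
    by (cases "\<gamma> = 0 \<or> - D = {}") (auto simp: Collect_conj_eq[symmetric] Int_def[symmetric])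
qed

lemma pw_bfac_pos_iff:
  assumes "0 < \<alpha>" "0 < s" "z \<in> D"
  shows "0 < pw (bfac \<alpha> D s z) \<gamma> \<longleftrightarrow> z \<in> positivity_set \<gamma> D"
proof -
  have "bfac \<alpha> D s z = 0 \<longleftrightarrow> - D \<noteq> {} \<and> infdist z (- D) = 0"
    unfolding bfac_def using assms infdist_nonneg[of z "-D"] by (auto simp: min_def)
  moreover have "0 \<le> bfac \<alpha> D s z" using assms by (intro bfac_nonneg) auto
  ultimately show ?thesis using assms unfolding pw_def positivity_set_def by auto
qed

text \<open>The integrals in the theorem only see the part of the measure that lives on the
  positivity set, and restricted to that set a measure with finite right-hand side is
  sigma-finite.\<close>
lemma sigma_finite_density_positivity_set:
  fixes y :: "'a::euclidean_space"
  assumes sets_\<mu>: "sets \<mu> = sets borel" and [measurable]: "D \<in> sets borel"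
    and \<alpha>: "0 < \<alpha>" and t: "0 < t" and finite: "boundary_potential \<alpha> \<gamma> D t \<mu> y < \<infinity>"
  shows "sigma_finite_measure (density \<mu> (indicator (positivity_set \<gamma> D)))"
proof -
  note sets_\<mu>[measurable_cong]
  obtain s where s: "s \<in> {0<..<t}"
    and fin_s: "(\<integral>\<^sup>+z. indicator D z * ennreal (boundary_kernel \<alpha> \<gamma> D y s z) \<partial>\<mu>) < \<infinity>"
    using nn_integral_interval_finite_imp[OF finite[unfolded boundary_potential_def] t] by blast
  show ?thesis
  proof (rule sigma_finite_density_indicator[OF sets_\<mu>])
    show "(\<lambda>z. boundary_kernel \<alpha> \<gamma> D y s z) \<in> borel_measurable borel" by measurable
    show "0 < boundary_kernel \<alpha> \<gamma> D y s z" if "z \<in> positivity_set \<gamma> D" for z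
      using that s pw_bfac_pos_iff[OF \<alpha>, of s z D \<gamma>] q_pos[of s \<alpha> y z]
      unfolding boundary_kernel_def positivity_set_def by auto
    have "(\<integral>\<^sup>+z. indicator (positivity_set \<gamma> D) z * ennreal (boundary_kernel \<alpha> \<gamma> D y s z) \<partial>\<mu>)
        \<le> (\<integral>\<^sup>+z. indicator D z * ennreal (boundary_kernel \<alpha> \<gamma> D y s z) \<partial>\<mu>)"
      by (intro nn_integral_mono) (auto simp: indicator_def positivity_set_def)
    then show "(\<integral>\<^sup>+z. indicator (positivity_set \<gamma> D) z * ennreal (boundary_kernel \<alpha> \<gamma> D y s z) \<partial>\<mu>) < \<infinity>"
      using fin_s by (rule le_less_trans)
  qed measurable
qed

lemma pw_bfac_eq_0_outside_positivity_set:
  "0 < \<alpha> \<Longrightarrow> 0 < s \<Longrightarrow> z \<in> D \<Longrightarrow> z \<notin> positivity_set \<gamma> D \<Longrightarrow> pw (bfac \<alpha> D s z) \<gamma> = 0"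
  using pw_bfac_pos_iff[of \<alpha> s z D \<gamma>] pw_nonneg[of "bfac \<alpha> D s z" \<gamma>] by simp

lemma boundary_potential_density_positivity_set:
  assumes "sets \<mu> = sets borel" "D \<in> sets borel" "0 < \<alpha>"
  shows "boundary_potential \<alpha> \<gamma> D t (density \<mu> (indicator (positivity_set \<gamma> D))) u
       = boundary_potential \<alpha> \<gamma> D t \<mu> u"
  unfolding boundary_potential_def
proof (rule time_integral_density_indicator_eq)
  note assms(2)[measurable]
  show "(\<lambda>z. indicator D z * ennreal (boundary_kernel \<alpha> \<gamma> D u s z)) \<in> borel_measurable borel" for s
    by measurable
  show "indicator D z * ennreal (boundary_kernel \<alpha> \<gamma> D u s z) = 0"
    if "s \<in> {0<..<t}" "z \<notin> positivity_set \<gamma> D" for s z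
    using that assms(3) pw_bfac_eq_0_outside_positivity_set[of \<alpha> s z D \<gamma>]
    by (cases "z \<in> D") (auto simp: boundary_kernel_def)
qed (use assms in auto)

lemma convolution_integral_density_positivity_set:
  assumes "sets \<mu> = sets borel" "D \<in> sets borel" "0 < \<alpha>"
  shows "convolution_integral \<alpha> \<gamma> D t (density \<mu> (indicator (positivity_set \<gamma> D))) x y
       = convolution_integral \<alpha> \<gamma> D t \<mu> x y"
  unfolding convolution_integral_def
proof (rule time_integral_density_indicator_eq)
  note assms(2)[measurable]
  show "(\<lambda>z. indicator D z * ennreal (psi \<alpha> \<gamma> D (t - s) x z * psi \<alpha> \<gamma> D s z y
      * q \<alpha> (t - s) x z * q \<alpha> s z y)) \<in> borel_measurable borel" for s
    by measurable
  show "indicator D z * ennreal (psi \<alpha> \<gamma> D (t - s) x z * psi \<alpha> \<gamma> D s z y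
      * q \<alpha> (t - s) x z * q \<alpha> s z y) = 0"
    if "s \<in> {0<..<t}" "z \<notin> positivity_set \<gamma> D" for s z
    using that assms(3) pw_bfac_eq_0_outside_positivity_set[of \<alpha> s z D \<gamma>]
    by (cases "z \<in> D") (auto simp: psi_def)
qed (use assms in auto)

lemma convolution_integral_eq_0:
  fixes x y :: "'a::euclidean_space"
  assumes \<alpha>: "0 < \<alpha>" and \<gamma>: "0 \<le> \<gamma>" "\<gamma> \<le> \<alpha>" and zero: "psi \<alpha> \<gamma> D t x y * q \<alpha> t x y = 0"
  shows "convolution_integral \<alpha> \<gamma> D t \<mu> x y = 0"
proof -
  have "psi \<alpha> \<gamma> D (t - s) x z * psi \<alpha> \<gamma> D s z y * q \<alpha> (t - s) x z * q \<alpha> s z y \<le> 0"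
    if "0 < s" "s < t" for s z
    using convolution_integrand_le[OF \<alpha> \<gamma> that, of D x z y] zero by simp
  then have inner: "(\<integral>\<^sup>+z. indicator D z * ennreal (psi \<alpha> \<gamma> D (t - s) x z
      * psi \<alpha> \<gamma> D s z y * q \<alpha> (t - s) x z * q \<alpha> s z y) \<partial>\<mu>) = 0" if "0 < s" "s < t" for s
    using that by (simp add: ennreal_neg)
  have "convolution_integral \<alpha> \<gamma> D t \<mu> x y = (\<integral>\<^sup>+s. 0 \<partial>(lborel :: real measure))"
    unfolding convolution_integral_def by (intro nn_integral_cong) (simp add: inner split: split_indicator)
  then show ?thesis by simp
qed

lemma ennreal_cmult_add_twice:
  fixes S :: ennreal
  assumes "0 \<le> K"
  shows "ennreal K * S + S + ennreal K * S + S = ennreal (2 + 2 * K) * S"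
proof -
  have "ennreal (2 + 2 * K) = ennreal 2 * ennreal (1 + K)"
    using assms by (subst ennreal_mult[symmetric]) (auto simp: algebra_simps)
  also have "ennreal (1 + K) = 1 + ennreal K" using assms by (simp add: ennreal_plus)
  finally have "ennreal (2 + 2 * K) * S = 2 * ((1 + ennreal K) * S)" by (simp add: algebra_simps)
  also have "\<dots> = (S + ennreal K * S) + (S + ennreal K * S)" by (simp add: mult_2 distrib_right)
  finally show ?thesis by (simp add: add_ac)
qed

lemma convolution_integral_le_sup_sigma_finite:
  fixes x y :: "'a::euclidean_space"
  assumes "sigma_finite_measure N" "sets N = sets borel" "D \<in> sets borel"
    and \<alpha>: "0 < \<alpha>" and \<gamma>: "0 \<le> \<gamma>" "\<gamma> < \<alpha>" and t: "0 < t" and xy: "x \<in> D" "y \<in> D"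
  shows "convolution_integral \<alpha> \<gamma> D t N x y
    \<le> ennreal (convolution_const \<alpha> \<gamma> DIM('a) * psi \<alpha> \<gamma> D t x y * q \<alpha> t x y)
       * (SUP u\<in>D. boundary_potential \<alpha> \<gamma> D t N u)"
proof -
  define c where "c = pointwise_const \<alpha> \<gamma> DIM('a) * (psi \<alpha> \<gamma> D t x y * q \<alpha> t x y)"
  define S where "S = (SUP u\<in>D. boundary_potential \<alpha> \<gamma> D t N u)"
  define K where "K = time_const \<alpha> \<gamma> DIM('a)"
  have c: "0 \<le> c" unfolding c_def psi_def using pointwise_const_pos[OF \<alpha> \<gamma>(1)] q_pos[OF t, of \<alpha> x y]
    by (intro mult_nonneg_nonneg) (auto simp: pw_nonneg less_imp_le)
  have K: "0 \<le> K" unfolding K_def using \<alpha> \<gamma>(2) by (rule time_const_nonneg)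
  have potential: "boundary_potential \<alpha> \<gamma> D t N u \<le> S" if "u \<in> D" for u
    unfolding S_def using that by (rule SUP_upper)
  have "convolution_integral \<alpha> \<gamma> D t N x y
      \<le> ennreal c * (ennreal K * boundary_potential \<alpha> \<gamma> D t N x + boundary_potential \<alpha> \<gamma> D t N y
           + ennreal K * boundary_potential \<alpha> \<gamma> D t N y + boundary_potential \<alpha> \<gamma> D t N x)"
    unfolding c_def K_def using assms(1-3) \<alpha> \<gamma> t by (rule convolution_integral_le_potentials)
  also have "\<dots> \<le> ennreal c * (ennreal K * S + S + ennreal K * S + S)"
    using potential xy by (intro mult_left_mono add_mono) auto
  also have "ennreal K * S + S + ennreal K * S + S = ennreal (2 + 2 * K) * S"
    using K by (rule ennreal_cmult_add_twice)
  also have "ennreal c * (ennreal (2 + 2 * K) * S) = ennreal (c * (2 + 2 * K)) * S"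
    using c K by (simp add: ennreal_mult mult.assoc)
  also have "c * (2 + 2 * K) = convolution_const \<alpha> \<gamma> DIM('a) * psi \<alpha> \<gamma> D t x y * q \<alpha> t x y"
    unfolding c_def K_def convolution_const_def by (simp add: ac_simps)
  finally show ?thesis unfolding S_def .
qed

lemma convolution_integral_le:
  fixes x y :: "'a::euclidean_space"
  assumes D[measurable]: "D \<in> sets borel" and sets_\<mu>: "sets \<mu> = sets borel"
    and \<alpha>: "0 < \<alpha>" and \<gamma>: "0 \<le> \<gamma>" "\<gamma> < \<alpha>" and t: "0 < t" and xy: "x \<in> D" "y \<in> D"
  shows "convolution_integral \<alpha> \<gamma> D t \<mu> x y
    \<le> ennreal (convolution_const \<alpha> \<gamma> DIM('a) * psi \<alpha> \<gamma> D t x y * q \<alpha> t x y)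
       * (SUP u\<in>D. boundary_potential \<alpha> \<gamma> D t \<mu> u)"
proof (cases "(SUP u\<in>D. boundary_potential \<alpha> \<gamma> D t \<mu> u) < \<infinity>")
  case True
  define N where "N = density \<mu> (indicator (positivity_set \<gamma> D))"
  have "boundary_potential \<alpha> \<gamma> D t \<mu> y < \<infinity>"
    using SUP_upper[OF xy(2), of "boundary_potential \<alpha> \<gamma> D t \<mu>"] True by (rule le_less_trans)
  then have "sigma_finite_measure N"
    unfolding N_def by (rule sigma_finite_density_positivity_set[OF sets_\<mu> D \<alpha> t])
  moreover have "sets N = sets borel" unfolding N_def using sets_\<mu> by simp
  ultimately show ?thesis
    using convolution_integral_le_sup_sigma_finite[of N D \<alpha> \<gamma> t x y] assms
    unfolding N_def convolution_integral_density_positivity_set[OF sets_\<mu> D \<alpha>]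
      boundary_potential_density_positivity_set[OF sets_\<mu> D \<alpha>]
    by simp
next
  case False
  then have S: "(SUP u\<in>D. boundary_potential \<alpha> \<gamma> D t \<mu> u) = \<infinity>"
    by (simp only: infinity_ennreal_def not_less top_unique)
  define C where "C = convolution_const \<alpha> \<gamma> DIM('a) * psi \<alpha> \<gamma> D t x y * q \<alpha> t x y"
  have C: "0 < C \<or> psi \<alpha> \<gamma> D t x y * q \<alpha> t x y = 0"
    unfolding C_def psi_def using convolution_const_pos[OF \<alpha> \<gamma>] q_pos[OF t, of \<alpha> x y]
    by (auto simp: pw_nonneg less_le)
  then show ?thesis
  proof
    assume "0 < C"
    then have "ennreal C * \<infinity> = \<infinity>" by (simp add: ennreal_mult_eq_top_iff)
    then show ?thesis unfolding S C_def[symmetric] by simp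
  next
    assume zero: "psi \<alpha> \<gamma> D t x y * q \<alpha> t x y = 0"
    show ?thesis using convolution_integral_eq_0[OF \<alpha> \<gamma>(1) less_imp_le[OF \<gamma>(2)] zero, of \<mu>] by simp
  qed
qed

theorem theorem2p4:
  fixes \<alpha> \<gamma> :: real
  assumes "0 < \<alpha>" "\<alpha> < 2" "0 \<le> \<gamma>" "\<gamma> < \<alpha>"
  shows "\<exists>C3>0. \<forall>(D::'a::euclidean_space set) (\<mu>::'a measure) t x y.
     D \<in> sets borel \<longrightarrow> sets \<mu> = sets borel \<longrightarrow> 0 < t \<longrightarrow> x \<in> D \<longrightarrow> y \<in> D \<longrightarrow>
     (\<integral>\<^sup>+ s. indicator {0<..<t} s *
        (\<integral>\<^sup>+ z. indicator D z * ennreal (psi \<alpha> \<gamma> D (t - s) x z * psi \<alpha> \<gamma> D s z y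
                    * q \<alpha> (t - s) x z * q \<alpha> s z y) \<partial>\<mu>) \<partial>lborel)
     \<le> ennreal (C3 * psi \<alpha> \<gamma> D t x y * q \<alpha> t x y) *
       (SUP u\<in>D. \<integral>\<^sup>+ s. indicator {0<..<t} s *
          (\<integral>\<^sup>+ z. indicator D z * ennreal (pw (bfac \<alpha> D s z) \<gamma> * q \<alpha> s u z) \<partial>\<mu>) \<partial>lborel)"
proof (intro exI[of _ "convolution_const \<alpha> \<gamma> DIM('a)"] conjI allI impI)
  show "0 < convolution_const \<alpha> \<gamma> DIM('a)"
    using assms by (intro convolution_const_pos)
  fix D :: "'a set" and \<mu> :: "'a measure" and t :: real and x y :: 'a
  assume "D \<in> sets borel" "sets \<mu> = sets borel" "0 < t" "x \<in> D" "y \<in> D"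
  then have "convolution_integral \<alpha> \<gamma> D t \<mu> x y
      \<le> ennreal (convolution_const \<alpha> \<gamma> DIM('a) * psi \<alpha> \<gamma> D t x y * q \<alpha> t x y)
         * (SUP u\<in>D. boundary_potential \<alpha> \<gamma> D t \<mu> u)"
    using assms by (intro convolution_integral_le) auto
  then show "(\<integral>\<^sup>+ s. indicator {0<..<t} s *
        (\<integral>\<^sup>+ z. indicator D z * ennreal (psi \<alpha> \<gamma> D (t - s) x z * psi \<alpha> \<gamma> D s z y
                    * q \<alpha> (t - s) x z * q \<alpha> s z y) \<partial>\<mu>) \<partial>lborel)
     \<le> ennreal (convolution_const \<alpha> \<gamma> DIM('a) * psi \<alpha> \<gamma> D t x y * q \<alpha> t x y) *
       (SUP u\<in>D. \<integral>\<^sup>+ s. indicator {0<..<t} s *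
          (\<integral>\<^sup>+ z. indicator D z * ennreal (pw (bfac \<alpha> D s z) \<gamma> * q \<alpha> s u z) \<partial>\<mu>) \<partial>lborel)"
    unfolding convolution_integral_def boundary_potential_def boundary_kernel_def .
qed

end
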